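(* There exists a sequence $(\Omega_n,P_n,\pi_n)$ of finite irreducible reversible Markov chains (in continuous time) satisfying the product condition $t^{(n)}_{\mathrm{rel}}=o(t^{(n)}_{\mathrm{mix}})$, together with sets $A_n\subset\Omega_n$ and states $x_n\in\Omega_n$, such that: (a) $\pi_n(A_n)\ge1/2$ and $\mathbb E_{x_n}[T_{A_n}]=t^{(n)}_{\mathrm H}(1/2)$; (b) the hitting times of $A_n$ from $x_n$ are concentrated, i.e. for every $\epsilon>0$, $\lim_{n\to\infty}\mathrm P_{x_n}\big[|T_{A_n}-\mathbb E_{x_n}[T_{A_n}]|>\epsilon\,\mathbb E_{x_n}[T_{A_n}]\big]=0$; and (c) the sequence does not exhibit a cutoff.
   Context: Chains run in continuous time with heat kernel $H_t(x,y)=\sum_{k\ge0}e^{-t}\frac{t^k}{k!}P^k(x,y)$. $d(t):=\max_x\|\mathrm P^t_x-\pi\|_{\mathrm{TV}}$, $t_{\mathrm{mix}}(\epsilon):=\inf\{t:d(t)\le\epsilon\}$, $t_{\mathrm{mix}}:=t_{\mathrm{mix}}(1/4)$; $t_{\mathrm{rel}}:=(1-\lambda_2)^{-1}$ where $\lambda_2$ is the second largest eigenvalue of $P$. $T_A:=\inf\{t\ge0:X_t\in A\}$; $t_{\mathrm H}(\alpha):=\max_{x\in\Omega,\,A\subset\Omega:\pi(A)\ge\alpha}\mathbb E_x[T_A]$. A sequence exhibits a cutoff if $t^{(n)}_{\mathrm{mix}}(\epsilon)/t^{(n)}_{\mathrm{mix}}(1-\epsilon)\to1$ for every $0<\epsilon<1$.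 *)

theory Defs
  imports "HOL-Analysis.Analysis" "HOL-Library.Landau_Symbols"
begin

text \<open>A finite Markov chain is given by a finite nonempty state space S :: nat set,
  a transition kernel P :: nat => nat => real and a distribution mu :: nat => real.
  Only values on S are relevant.\<close>

fun mpow :: "(nat \<Rightarrow> nat \<Rightarrow> real) \<Rightarrow> nat set \<Rightarrow> nat \<Rightarrow> nat \<Rightarrow> nat \<Rightarrow> real" where
  "mpow P S 0 x y = (if x = y then 1 else 0)"
| "mpow P S (Suc k) x y = (\<Sum>z\<in>S. P x z * mpow P S k z y)"

definition stochastic :: "nat set \<Rightarrow> (nat \<Rightarrow> nat \<Rightarrow> real) \<Rightarrow> bool" where
  "stochastic S P \<longleftrightarrow> (\<forall>x\<in>S. \<forall>y\<in>S. P x y \<ge> 0) \<and> (\<forall>x\<in>S. (\<Sum>y\<in>S. P x y) = 1)"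

definition irreducible_chain :: "nat set \<Rightarrow> (nat \<Rightarrow> nat \<Rightarrow> real) \<Rightarrow> bool" where
  "irreducible_chain S P \<longleftrightarrow> (\<forall>x\<in>S. \<forall>y\<in>S. \<exists>k. mpow P S k x y > 0)"

definition reversible_chain :: "nat set \<Rightarrow> (nat \<Rightarrow> nat \<Rightarrow> real) \<Rightarrow> (nat \<Rightarrow> real) \<Rightarrow> bool" where
  "reversible_chain S P mu \<longleftrightarrow> (\<forall>x\<in>S. \<forall>y\<in>S. mu x * P x y = mu y * P y x)"

text \<open>Finite irreducible reversible Markov chain (S,P,mu); mu is the (positive)
  stationary distribution, stationarity being implied by reversibility.\<close>
definition fin_irr_rev_chain :: "nat set \<Rightarrow> (nat \<Rightarrow> nat \<Rightarrow> real) \<Rightarrow> (nat \<Rightarrow> real) \<Rightarrow> bool" where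
  "fin_irr_rev_chain S P mu \<longleftrightarrow> finite S \<and> S \<noteq> {} \<and> stochastic S P
     \<and> (\<forall>x\<in>S. mu x > 0) \<and> (\<Sum>x\<in>S. mu x) = 1
     \<and> irreducible_chain S P \<and> reversible_chain S P mu"

definition heat :: "(nat \<Rightarrow> nat \<Rightarrow> real) \<Rightarrow> nat set \<Rightarrow> real \<Rightarrow> nat \<Rightarrow> nat \<Rightarrow> real" where
  "heat P S t x y = (\<Sum>k. exp (- t) * t ^ k / fact k * mpow P S k x y)"

definition tv_dist :: "nat set \<Rightarrow> (nat \<Rightarrow> real) \<Rightarrow> (nat \<Rightarrow> real) \<Rightarrow> real" where
  "tv_dist S mu nu = Max ((\<lambda>B. \<bar>(\<Sum>y\<in>B. mu y) - (\<Sum>y\<in>B. nu y)\<bar>) ` Pow S)"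

definition dist_stat :: "nat set \<Rightarrow> (nat \<Rightarrow> nat \<Rightarrow> real) \<Rightarrow> (nat \<Rightarrow> real) \<Rightarrow> real \<Rightarrow> real" where
  "dist_stat S P mu t = Max ((\<lambda>x. tv_dist S (heat P S t x) mu) ` S)"

definition tmix :: "nat set \<Rightarrow> (nat \<Rightarrow> nat \<Rightarrow> real) \<Rightarrow> (nat \<Rightarrow> real) \<Rightarrow> real \<Rightarrow> real" where
  "tmix S P mu eps = Inf {t. t \<ge> 0 \<and> dist_stat S P mu t \<le> eps}"

definition is_eigenvalue :: "nat set \<Rightarrow> (nat \<Rightarrow> nat \<Rightarrow> real) \<Rightarrow> real \<Rightarrow> bool" where
  "is_eigenvalue S P l \<longleftrightarrow> (\<exists>f. (\<exists>x\<in>S. f x \<noteq> 0) \<and> (\<forall>x\<in>S. (\<Sum>y\<in>S. P x y * f y) = l * f x))"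

text \<open>Second largest eigenvalue (counted with multiplicity): it equals 1 iff the
  eigenspace of 1 is at least two-dimensional, i.e. contains a non-constant function;
  otherwise it is the largest eigenvalue below 1.\<close>
definition lambda2 :: "nat set \<Rightarrow> (nat \<Rightarrow> nat \<Rightarrow> real) \<Rightarrow> real" where
  "lambda2 S P = (if \<exists>f. (\<exists>x\<in>S. \<exists>y\<in>S. f x \<noteq> f y) \<and> (\<forall>x\<in>S. (\<Sum>y\<in>S. P x y * f y) = f x)
                  then 1 else Max {l. is_eigenvalue S P l \<and> l < 1})"

definition trel :: "nat set \<Rightarrow> (nat \<Rightarrow> nat \<Rightarrow> real) \<Rightarrow> real" where
  "trel S P = 1 / (1 - lambda2 S P)"

text \<open>Probability that the jump chain, started at x, avoids A at steps 0..k,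
  i.e. P_x[tau_A > k] for the discrete hitting time tau_A of the jump chain.\<close>
fun avoid :: "(nat \<Rightarrow> nat \<Rightarrow> real) \<Rightarrow> nat set \<Rightarrow> nat set \<Rightarrow> nat \<Rightarrow> nat \<Rightarrow> real" where
  "avoid P S A 0 x = (if x \<in> A then 0 else 1)"
| "avoid P S A (Suc k) x = (if x \<in> A then 0 else (\<Sum>y\<in>S. P x y * avoid P S A k y))"

text \<open>The continuous-time
  chain is the jump chain run at the jump times of a rate-1 Poisson clock N_t, so
  T_A > t iff N_t < tau_A, giving sum_k e^{-t} t^k/k! P_x[tau_A > k] for t >= 0.\<close>
definition hit_gt :: "(nat \<Rightarrow> nat \<Rightarrow> real) \<Rightarrow> nat set \<Rightarrow> nat set \<Rightarrow> nat \<Rightarrow> real \<Rightarrow> real" where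
  "hit_gt P S A x t = (if t < 0 then 1 else (\<Sum>k. exp (- t) * t ^ k / fact k * avoid P S A k x))"

text \<open>P_x[T_A < s]. T_A has no atoms in (0,infinity) (atom possibly only at 0),
  hence P_x[T_A < s] = 1 - P_x[T_A > s] for s > 0, and it is 0 for s <= 0.\<close>
definition hit_lt :: "(nat \<Rightarrow> nat \<Rightarrow> real) \<Rightarrow> nat set \<Rightarrow> nat set \<Rightarrow> nat \<Rightarrow> real \<Rightarrow> real" where
  "hit_lt P S A x s = (if s \<le> 0 then 0 else 1 - hit_gt P S A x s)"

definition hit_exp :: "(nat \<Rightarrow> nat \<Rightarrow> real) \<Rightarrow> nat set \<Rightarrow> nat set \<Rightarrow> nat \<Rightarrow> real" where
  "hit_exp P S A x = integral {0..} (hit_gt P S A x)"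

definition hit_dev_prob :: "(nat \<Rightarrow> nat \<Rightarrow> real) \<Rightarrow> nat set \<Rightarrow> nat set \<Rightarrow> nat \<Rightarrow> real \<Rightarrow> real" where
  "hit_dev_prob P S A x eps =
     hit_gt P S A x ((1 + eps) * hit_exp P S A x) + hit_lt P S A x ((1 - eps) * hit_exp P S A x)"

definition tH :: "nat set \<Rightarrow> (nat \<Rightarrow> nat \<Rightarrow> real) \<Rightarrow> (nat \<Rightarrow> real) \<Rightarrow> real \<Rightarrow> real" where
  "tH S P mu alpha = Max {hit_exp P S A x | x A. x \<in> S \<and> A \<subseteq> S \<and> (\<Sum>y\<in>A. mu y) \<ge> alpha}"

definition has_cutoff :: "(nat \<Rightarrow> nat set) \<Rightarrow> (nat \<Rightarrow> nat \<Rightarrow> nat \<Rightarrow> real) \<Rightarrow> (nat \<Rightarrow> nat \<Rightarrow> real) \<Rightarrow> bool" where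
  "has_cutoff S P mu \<longleftrightarrow> (\<forall>eps. 0 < eps \<and> eps < 1 \<longrightarrow>
     (\<lambda>n. tmix (S n) (P n) (mu n) eps / tmix (S n) (P n) (mu n) (1 - eps)) \<longlonglongrightarrow> 1)"

end

theory Submission
  imports Defs "Jordan_Normal_Form.Spectral_Radius"
begin

text \<open>The chains are spiders: a root with legs of lengths \<open>10N\<close>, \<open>20N\<close>, \<open>1\<close> and \<open>1\<close>, along
  which the walk moves towards the root at unit speed, stepping backwards only with probability
  \<open>N\<^sup>-\<^sup>3\<close>. The root carries almost all stationary mass, so every set of mass \<open>1/2\<close> contains it,
  and \<open>t\<^sub>H(1/2)\<close> is the expected hitting time of the root from the tip of leg 0. That time is
  \<open>10N + o(N)\<close> and, by Chernoff bounds for the Poisson clock, concentrated. On leg 1 the walk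
  also jumps to the root at rate \<open>1/(8N)\<close>, so the hitting time from its tip is spread over
  \<open>[0, 20N]\<close>; since the distance to stationarity is governed by hitting times of the root, it
  drops below \<open>39/40\<close> by time \<open>12N\<close> but stays above \<open>1/40\<close> until \<open>14N\<close>, which rules out
  cutoff. Finally, the chain killed at the root contracts \<open>2 ^ depth\<close> by a factor of about
  \<open>1/2\<close>, which bounds the relaxation time by \<open>4\<close>, whereas \<open>t\<^sub>m\<^sub>i\<^sub>x \<ge> 8N\<close>.\<close>

section \<open>Poisson mixtures and Chernoff bounds\<close>

lemma add_one_less_exp: "x \<noteq> 0 \<Longrightarrow> 1 + x < exp (x::real)"
proof (cases "1 + x/2 < 0")
  case True thus ?thesis using exp_gt_zero[of x] by linarith
next
  case False
  assume x: "x \<noteq> 0"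
  have "(1 + x/2)^2 \<le> exp (x/2) ^ 2"
    using False by (intro power_mono) (use exp_ge_add_one_self[of "x/2"] in auto)
  also have "exp (x/2) ^ 2 = exp x" by (simp add: power2_eq_square exp_add[symmetric])
  finally have "1 + x + x^2/4 \<le> exp x" by (simp add: power2_eq_square algebra_simps)
  moreover have "x^2 > 0" using x by simp
  ultimately show ?thesis by linarith
qed

lemma chernoff_base_bounds:
  fixes u :: real assumes "0 < u" "u \<noteq> 1"
  shows "0 \<le> u * exp (1 - u)" "u * exp (1 - u) < 1"
proof -
  show "0 \<le> u * exp (1 - u)" using assms by simp
  have "u < exp (u - 1)" using add_one_less_exp[of "u - 1"] assms by simp
  hence "u * exp (1 - u) < exp (u - 1) * exp (1 - u)" using assms by (simp add: mult_strict_right_mono)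
  also have "\<dots> = 1" by (simp add: exp_add[symmetric])
  finally show "u * exp (1 - u) < 1" .
qed

lemma exp_le_3: "x \<le> 1 \<Longrightarrow> exp (x::real) \<le> 3"
  using exp_le exp_le_cancel_iff[of x 1] by linarith

lemma sum_power_le_twice:
  fixes s :: real assumes s: "0 \<le> s" "s \<le> 1/2"
  shows "(\<Sum>j=1..m. s ^ j) \<le> 2 * s"
proof (cases "m = 0")
  case False
  have "(\<Sum>j=1..m. s ^ j) = (s - s ^ Suc m) / (1 - s)" using False s by (simp add: sum_gp)
  also have "\<dots> \<le> s / (1 - s)" using s by (intro divide_right_mono) auto
  also have "\<dots> \<le> 2 * s" using s mult_left_mono[of "2 * s" 1 s] by (simp add: divide_simps algebra_simps)
  finally show ?thesis .
qed (use s in simp)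

lemma tendsto_power_filterlim:
  fixes b :: real
  assumes "0 \<le> b" "b < 1" "filterlim f sequentially sequentially"
  shows "(\<lambda>n. b ^ f n) \<longlonglongrightarrow> 0"
proof -
  have "norm b < 1" using assms(1,2) by simp
  from filterlim_compose[OF LIMSEQ_power_zero[OF this] assms(3)] show ?thesis by simp
qed

lemma eventually_power_le:
  fixes b :: real
  assumes "0 \<le> b" "b < 1" "0 < e" "filterlim f sequentially sequentially"
  shows "eventually (\<lambda>n. b ^ f n \<le> e) sequentially"
  using order_tendstoD(2)[OF tendsto_power_filterlim[OF assms(1,2,4)] assms(3)] by (auto elim: eventually_mono)

definition pois :: "real \<Rightarrow> nat \<Rightarrow> real" where
  "pois t k = exp (- t) * t ^ k / fact k"

lemma pois_nonneg: "0 \<le> t \<Longrightarrow> 0 \<le> pois t k"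
  by (simp add: pois_def)

lemma sums_pois_generating: "(\<lambda>k. pois t k * q ^ k) sums exp (t * (q - 1))"
proof -
  have "(\<lambda>k. exp (-t) * ((t*q)^k /\<^sub>R fact k)) sums (exp (-t) * exp (t*q))"
    by (intro sums_mult exp_converges)
  moreover have "(\<lambda>k. exp (-t) * ((t*q)^k /\<^sub>R fact k)) = (\<lambda>k. pois t k * q^k)"
    by (auto simp: pois_def divide_inverse power_mult_distrib)
  moreover have "exp (-t) * exp (t*q) = exp (t * (q - 1))"
    by (simp add: exp_add[symmetric] algebra_simps)
  ultimately show ?thesis by simp
qed

lemma sums_pois: "pois t sums 1"
  using sums_pois_generating[of t 1] by simp

lemma summable_pois_mult:
  assumes "0 \<le> t" "\<And>k. 0 \<le> a k" "\<And>k. a k \<le> 1"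
  shows "summable (\<lambda>k. pois t k * a k)"
proof (rule summable_comparison_test'[where g = "pois t"])
  show "summable (pois t)" using sums_pois by (simp add: sums_iff)
  fix k show "norm (pois t k * a k) \<le> pois t k"
    using assms pois_nonneg[of t k] by (simp add: abs_mult mult_left_le)
qed

lemma pois_mixture_bounds:
  assumes "0 \<le> t" "\<And>k. 0 \<le> a k" "\<And>k. a k \<le> 1"
  shows "0 \<le> (\<Sum>k. pois t k * a k)" "(\<Sum>k. pois t k * a k) \<le> 1"
proof -
  have s: "summable (\<lambda>k. pois t k * a k)" using assms by (rule summable_pois_mult)
  show "0 \<le> (\<Sum>k. pois t k * a k)"
    using s assms pois_nonneg[of t] by (intro suminf_nonneg) auto
  have "(\<Sum>k. pois t k * a k) \<le> (\<Sum>k. pois t k)"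
    using s assms pois_nonneg[of t] sums_pois[of t] by (intro suminf_le) (auto simp: sums_iff mult_left_le)
  thus "(\<Sum>k. pois t k * a k) \<le> 1" using sums_pois[of t] by (simp add: sums_iff)
qed

text \<open>Chernoff bounds for the Poisson clock: on either side of \<open>m\<close> its mass is dominated by
  \<open>\<Sum>k. pois t k * l ^ k / l ^ m = exp (t * (l - 1)) / l ^ m\<close> for a suitable \<open>l = 1/u\<close>.\<close>
lemma chernoff_factor_le:
  assumes u: "0 < u" and sign: "(1/u - 1) * (t - u * real m) \<le> 0"
  shows "exp (t * (1/u - 1)) / (1/u) ^ m \<le> (u * exp (1 - u)) ^ m"
proof -
  have "exp (t * (1/u - 1)) \<le> exp (u * real m * (1/u - 1))"
    using sign by (simp add: algebra_simps)
  also have "u * real m * (1/u - 1) = real m * (1 - u)" using u by (simp add: field_simps)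
  also have "exp (real m * (1 - u)) = exp (1 - u) ^ m" by (simp add: exp_of_nat_mult[symmetric])
  finally have "exp (t * (1/u - 1)) / (1/u) ^ m \<le> exp (1 - u) ^ m / (1/u) ^ m"
    using u by (simp add: divide_right_mono)
  also have "\<dots> = (u * exp (1 - u)) ^ m" using u by (simp add: power_divide power_mult_distrib field_simps)
  finally show ?thesis .
qed

lemma pois_mixture_lower:
  assumes t: "0 \<le> t" "t \<le> u * real m" and u: "0 < u" "u \<le> 1"
    and a: "\<And>k. 0 \<le> a k" "\<And>k. a k \<le> 1" "\<And>k. k < m \<Longrightarrow> c \<le> a k" and c: "0 \<le> c"
  shows "c * (1 - (u * exp (1 - u)) ^ m) \<le> (\<Sum>k. pois t k * a k)"
proof -
  define l where "l = 1 / u"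
  have l: "1 \<le> l" using u by (simp add: l_def)
  have s1: "(\<lambda>k. c * (pois t k - pois t k * l ^ k / l ^ m)) sums (c * (1 - exp (t * (l - 1)) / l ^ m))"
    by (intro sums_mult sums_diff sums_pois sums_divide sums_pois_generating)
  have s2: "summable (\<lambda>k. pois t k * a k)" by (rule summable_pois_mult) (use t a in auto)
  have le: "c * (pois t k - pois t k * l ^ k / l ^ m) \<le> pois t k * a k" for k
  proof (cases "k < m")
    case True
    have "l ^ k \<le> l ^ m" using l True by (intro power_increasing) auto
    hence "0 \<le> pois t k * l ^ k / l ^ m" using pois_nonneg[OF t(1)] l by simp
    hence "c * (pois t k - pois t k * l ^ k / l ^ m) \<le> c * pois t k"
      using c by (simp add: mult_left_mono)
    also have "\<dots> \<le> a k * pois t k" using a(3)[OF True] pois_nonneg[OF t(1)] by (simp add: mult_right_mono)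
    finally show ?thesis by (simp add: mult.commute)
  next
    case False
    have "l ^ m \<le> l ^ k" using l False by (intro power_increasing) auto
    hence "pois t k \<le> pois t k * l ^ k / l ^ m"
      using pois_nonneg[OF t(1), of k] l by (simp add: le_divide_eq mult_left_mono)
    hence "c * (pois t k - pois t k * l ^ k / l ^ m) \<le> 0" using c by (simp add: mult_nonneg_nonpos)
    also have "0 \<le> pois t k * a k" using pois_nonneg[OF t(1)] a(1) by simp
    finally show ?thesis .
  qed
  have "c * (1 - exp (t * (l - 1)) / l ^ m) \<le> (\<Sum>k. pois t k * a k)"
    using sums_le[OF _ s1 summable_sums[OF s2]] le by blast
  moreover have "exp (t * (l - 1)) / l ^ m \<le> (u * exp (1 - u)) ^ m"
    unfolding l_def using u t l by (intro chernoff_factor_le) (auto simp: l_def mult_nonneg_nonpos)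
  ultimately show ?thesis using c by (meson order_trans mult_left_mono diff_left_mono)
qed

lemma pois_mixture_upper:
  assumes t: "u * real m \<le> t" and u: "1 \<le> u"
    and a: "\<And>k. 0 \<le> a k" "\<And>k. a k \<le> 1" "\<And>k. m \<le> k \<Longrightarrow> a k \<le> c" and c: "0 \<le> c"
  shows "(\<Sum>k. pois t k * a k) \<le> c + (u * exp (1 - u)) ^ m"
proof -
  have t0: "0 \<le> t" using t u mult_nonneg_nonneg[of u "real m"] by linarith
  define l where "l = 1 / u"
  have l: "l \<le> 1" "0 < l" using u by (auto simp: l_def)
  have s1: "(\<lambda>k. pois t k * c + pois t k * l ^ k / l ^ m) sums (c + exp (t * (l - 1)) / l ^ m)"
    using sums_mult2[OF sums_pois[of t], of c] by (intro sums_add sums_divide sums_pois_generating) auto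
  have s2: "summable (\<lambda>k. pois t k * a k)" by (rule summable_pois_mult) (use t0 a in auto)
  have le: "pois t k * a k \<le> pois t k * c + pois t k * l ^ k / l ^ m" for k
  proof (cases "k < m")
    case True
    have "l ^ m \<le> l ^ k" using l True by (intro power_decreasing) auto
    hence "1 \<le> l ^ k / l ^ m" using l by simp
    hence "a k \<le> l ^ k / l ^ m" using a(2)[of k] by linarith
    hence "pois t k * a k \<le> pois t k * (l ^ k / l ^ m)" using pois_nonneg[OF t0] by (metis mult_left_mono)
    moreover have "0 \<le> pois t k * c" using pois_nonneg[OF t0] c by simp
    ultimately show ?thesis by simp
  next
    case False
    have "pois t k * a k \<le> pois t k * c" using a(3)[of k] False pois_nonneg[OF t0] by (simp add: mult_left_mono)
    moreover have "0 \<le> pois t k * l ^ k / l ^ m" using pois_nonneg[OF t0] l by simp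
    ultimately show ?thesis by simp
  qed
  have "(\<Sum>k. pois t k * a k) \<le> c + exp (t * (l - 1)) / l ^ m"
    using sums_le[OF _ summable_sums[OF s2] s1] le by blast
  moreover have "exp (t * (l - 1)) / l ^ m \<le> (u * exp (1 - u)) ^ m"
    unfolding l_def using u t l by (intro chernoff_factor_le) (auto simp: l_def mult_nonpos_nonneg)
  ultimately show ?thesis by simp
qed

section \<open>Finite chains and hitting probabilities\<close>

lemma stochastic_nonneg: "stochastic S P \<Longrightarrow> x \<in> S \<Longrightarrow> y \<in> S \<Longrightarrow> 0 \<le> P x y"
  by (auto simp: stochastic_def)

lemma stochastic_row_sum: "stochastic S P \<Longrightarrow> x \<in> S \<Longrightarrow> (\<Sum>y\<in>S. P x y) = 1"
  by (auto simp: stochastic_def)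

lemma stochastic_le_1:
  assumes "finite S" "stochastic S P" "x \<in> S" "y \<in> S" shows "P x y \<le> 1"
proof -
  have "P x y \<le> (\<Sum>y\<in>S. P x y)" using assms by (intro member_le_sum) (auto intro: stochastic_nonneg)
  thus ?thesis using stochastic_row_sum[OF assms(2,3)] by simp
qed

lemma mpow_nonneg: assumes "stochastic S P" "x \<in> S" shows "0 \<le> mpow P S k x y"
  using assms(2)
proof (induction k arbitrary: x)
  case 0 thus ?case by simp
next
  case (Suc k) thus ?case using stochastic_nonneg[OF assms(1)] by (auto intro!: sum_nonneg)
qed

lemma mpow_row_sum:
  assumes "finite S" "stochastic S P" "x \<in> S" shows "(\<Sum>y\<in>S. mpow P S k x y) = 1"
  using assms(3)
proof (induction k arbitrary: x)
  case 0 thus ?case using assms(1) by simp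
next
  case (Suc k)
  have "(\<Sum>y\<in>S. mpow P S (Suc k) x y) = (\<Sum>z\<in>S. P x z * (\<Sum>y\<in>S. mpow P S k z y))"
    by (simp add: sum_distrib_left) (rule sum.swap)
  also have "\<dots> = (\<Sum>z\<in>S. P x z)" using Suc.IH by simp
  finally show ?case using stochastic_row_sum[OF assms(2) Suc.prems] by simp
qed

lemma mpow_le_1:
  assumes "finite S" "stochastic S P" "x \<in> S" "y \<in> S" shows "mpow P S k x y \<le> 1"
proof -
  have "mpow P S k x y \<le> (\<Sum>y\<in>S. mpow P S k x y)"
    using assms mpow_nonneg by (intro member_le_sum) auto
  thus ?thesis using mpow_row_sum[OF assms(1-3)] by simp
qed

definition reachable :: "nat set \<Rightarrow> (nat \<Rightarrow> nat \<Rightarrow> real) \<Rightarrow> nat \<Rightarrow> nat \<Rightarrow> bool" where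
  "reachable S P x y \<longleftrightarrow> (\<exists>k. 0 < mpow P S k x y)"

lemma reachable_refl: "reachable S P x x"
  unfolding reachable_def by (rule exI[of _ 0]) simp

lemma reachable_step:
  assumes "finite S" "stochastic S P" "x \<in> S" "w \<in> S" "0 < P x w" "reachable S P w y"
  shows "reachable S P x y"
proof -
  obtain k where k: "0 < mpow P S k w y" using assms(6) by (auto simp: reachable_def)
  have "0 < P x w * mpow P S k w y" using assms(5) k by simp
  also have "\<dots> \<le> mpow P S (Suc k) x y"
    using assms stochastic_nonneg mpow_nonneg
    by (auto intro!: member_le_sum[where f = "\<lambda>z. P x z * mpow P S k z y"] mult_nonneg_nonneg)
  finally show ?thesis unfolding reachable_def by blast
qed

lemma avoid_eq_0: "y \<in> A \<Longrightarrow> avoid P S A k y = 0"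
  by (cases k) auto

lemma avoid_bounds:
  assumes "stochastic S P" "x \<in> S"
  shows "0 \<le> avoid P S A k x" "avoid P S A k x \<le> 1"
proof -
  have "0 \<le> avoid P S A k x \<and> avoid P S A k x \<le> 1"
    using assms(2)
  proof (induction k arbitrary: x)
    case 0 thus ?case by simp
  next
    case (Suc k)
    have "0 \<le> P x y * avoid P S A k y \<and> P x y * avoid P S A k y \<le> P x y" if "y \<in> S" for y
      using stochastic_nonneg[OF assms(1) Suc.prems that] Suc.IH[OF that] by (simp add: mult_left_le)
    hence "0 \<le> (\<Sum>y\<in>S. P x y * avoid P S A k y) \<and> (\<Sum>y\<in>S. P x y * avoid P S A k y) \<le> (\<Sum>y\<in>S. P x y)"
      by (auto intro: sum_nonneg sum_mono)
    thus ?case using stochastic_row_sum[OF assms(1) Suc.prems] by simp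
  qed
  thus "0 \<le> avoid P S A k x" "avoid P S A k x \<le> 1" by auto
qed

lemma avoid_antimono:
  assumes "stochastic S P" "x \<in> S" "A \<subseteq> B"
  shows "avoid P S B k x \<le> avoid P S A k x"
  using assms(2)
proof (induction k arbitrary: x)
  case 0 thus ?case using assms(3) by auto
next
  case (Suc k)
  have "P x y * avoid P S B k y \<le> P x y * avoid P S A k y" if "y \<in> S" for y
    using Suc.IH[OF that] stochastic_nonneg[OF assms(1) Suc.prems that] by (rule mult_left_mono)
  hence "(\<Sum>y\<in>S. P x y * avoid P S B k y) \<le> (\<Sum>y\<in>S. P x y * avoid P S A k y)"
    by (intro sum_mono) blast
  thus ?case using assms(3) avoid_bounds[OF assms(1) Suc.prems, of A "Suc k"] by auto
qed

text \<open>Such a function bounds both the probability of avoiding \<open>z\<close> and, via the Schur test,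
  the second eigenvalue.\<close>
definition lyapunov_killed :: "nat set \<Rightarrow> (nat \<Rightarrow> nat \<Rightarrow> real) \<Rightarrow> nat \<Rightarrow> (nat \<Rightarrow> real) \<Rightarrow> real \<Rightarrow> bool" where
  "lyapunov_killed S P z h \<rho> \<longleftrightarrow>
     (\<forall>x\<in>S - {z}. 0 < h x \<and> (\<Sum>y\<in>S - {z}. P x y * h y) \<le> \<rho> * h x)"

lemma sum_vanishing_on:
  fixes P :: "'a \<Rightarrow> 'b \<Rightarrow> real"
  assumes "finite S" "\<And>y. y \<in> A \<Longrightarrow> g y = 0"
  shows "(\<Sum>y\<in>S. P x y * g y) = (\<Sum>y\<in>S - A. P x y * g y)"
  by (rule sum.mono_neutral_right[OF assms(1)]) (use assms(2) in auto)

lemma avoid_le_lyapunov: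
  assumes fin: "finite S" and st: "stochastic S P" and ly: "lyapunov_killed S P z h \<rho>"
    and h: "\<And>x. x \<in> S - {z} \<Longrightarrow> 1 \<le> h x" and rho: "0 \<le> \<rho>" and x: "x \<in> S - {z}"
  shows "avoid P S {z} k x \<le> \<rho> ^ k * h x"
  using x
proof (induction k arbitrary: x)
  case 0 thus ?case using h by simp
next
  case (Suc k)
  have "avoid P S {z} (Suc k) x = (\<Sum>y\<in>S. P x y * avoid P S {z} k y)" using Suc.prems by simp
  also have "\<dots> = (\<Sum>y\<in>S - {z}. P x y * avoid P S {z} k y)"
    by (rule sum_vanishing_on[OF fin]) (simp add: avoid_eq_0)
  also have "\<dots> \<le> (\<Sum>y\<in>S - {z}. P x y * (\<rho> ^ k * h y))"
    using Suc.IH Suc.prems by (intro sum_mono mult_left_mono) (auto intro: stochastic_nonneg[OF st])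
  also have "\<dots> = \<rho> ^ k * (\<Sum>y\<in>S - {z}. P x y * h y)" by (simp add: sum_distrib_left algebra_simps)
  also have "\<dots> \<le> \<rho> ^ k * (\<rho> * h x)"
    using ly Suc.prems rho by (intro mult_left_mono) (auto simp: lyapunov_killed_def)
  finally show ?case by (simp add: mult.assoc mult.left_commute)
qed

lemma sum_avoid_le_lyapunov:
  assumes fin: "finite S" and st: "stochastic S P"
    and V: "\<And>x. x \<in> S - A \<Longrightarrow> 0 \<le> V x" "\<And>x. x \<in> S - A \<Longrightarrow> 1 + (\<Sum>y\<in>S - A. P x y * V y) \<le> V x"
    and x: "x \<in> S - A"
  shows "(\<Sum>k<m. avoid P S A k x) \<le> V x"
  using x
proof (induction m arbitrary: x)
  case 0 thus ?case using V(1) by simp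
next
  case (Suc m)
  have "(\<Sum>k<Suc m. avoid P S A k x) = 1 + (\<Sum>k<m. \<Sum>y\<in>S. P x y * avoid P S A k y)"
    using Suc.prems by (simp add: sum.lessThan_Suc_shift del: sum.lessThan_Suc)
  also have "\<dots> = 1 + (\<Sum>y\<in>S. P x y * (\<Sum>k<m. avoid P S A k y))"
    by (simp add: sum_distrib_left) (rule sum.swap)
  also have "\<dots> = 1 + (\<Sum>y\<in>S - A. P x y * (\<Sum>k<m. avoid P S A k y))"
    by (subst sum_vanishing_on[OF fin, of A]) (simp_all add: avoid_eq_0)
  also have "\<dots> \<le> 1 + (\<Sum>y\<in>S - A. P x y * V y)"
    using Suc.IH Suc.prems by (intro add_left_mono sum_mono mult_left_mono) (auto intro: stochastic_nonneg[OF st])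
  finally show ?case using V(2)[OF Suc.prems] by simp
qed

section \<open>Continuous-time hitting times\<close>

lemma hit_gt_eq: "0 \<le> t \<Longrightarrow> hit_gt P S A x t = (\<Sum>k. pois t k * avoid P S A k x)"
  by (simp add: hit_gt_def pois_def)

lemma hit_gt_bounds:
  assumes "stochastic S P" "x \<in> S"
  shows "0 \<le> hit_gt P S A x t" "hit_gt P S A x t \<le> 1"
proof (atomize(full), cases "t < 0")
  case False
  thus "0 \<le> hit_gt P S A x t \<and> hit_gt P S A x t \<le> 1"
    using pois_mixture_bounds[of t "\<lambda>k. avoid P S A k x"] avoid_bounds[OF assms] by (simp add: hit_gt_eq)
qed (simp add: hit_gt_def)

lemma hit_gt_lower:
  assumes "stochastic S P" "x \<in> S" and t: "0 \<le> t" "t \<le> u * real m" and u: "0 < u" "u \<le> 1"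
    and "\<And>k. k < m \<Longrightarrow> c \<le> avoid P S A k x" "0 \<le> c"
  shows "c * (1 - (u * exp (1 - u)) ^ m) \<le> hit_gt P S A x t"
  unfolding hit_gt_eq[OF t(1)] using assms avoid_bounds[OF assms(1,2)] by (intro pois_mixture_lower) auto

lemma hit_gt_upper:
  assumes "stochastic S P" "x \<in> S" and t: "u * real m \<le> t" and u: "1 \<le> u"
    and "\<And>k. m \<le> k \<Longrightarrow> avoid P S A k x \<le> c" "0 \<le> c"
  shows "hit_gt P S A x t \<le> c + (u * exp (1 - u)) ^ m"
proof -
  have "0 \<le> t" using t u mult_nonneg_nonneg[of u "real m"] by linarith
  thus ?thesis
    unfolding hit_gt_eq[OF \<open>0 \<le> t\<close>] using assms avoid_bounds[OF assms(1,2)] by (intro pois_mixture_upper) auto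
qed

lemma has_integral_pois: "((\<lambda>t. pois t k) has_integral 1) {0..}"
proof -
  have "((\<lambda>t. t powr (real k + 1 - 1) / exp t) has_integral Gamma (real k + 1)) {0..}"
    by (rule Gamma_integral_real) simp
  moreover have "Gamma (real k + 1) = fact k" using Gamma_fact[of k] by (simp add: add.commute)
  ultimately have "((\<lambda>t. (t powr real k / exp t) / fact k) has_integral fact k / fact k) {0..}"
    by (intro has_integral_divide) simp
  hence i: "((\<lambda>t. (t powr real k / exp t) / fact k) has_integral 1) {0..}" by simp
  show ?thesis
  proof (rule has_integral_spike[OF negligible_sing _ i])
    fix t assume "t \<in> {0::real..} - {0}"
    thus "pois t k = t powr real k / exp t / fact k"
      by (simp add: pois_def powr_realpow exp_minus field_simps)
  qed
qed

lemma integral_pois_mixture: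
  assumes a: "\<And>k. 0 \<le> a k" "\<And>k. a k \<le> 1" and sm: "summable a"
  shows "integral {0..} (\<lambda>t. \<Sum>k. pois t k * a k) = suminf a"
proof -
  define f where "f m t = (\<Sum>k<m. pois t k * a k)" for m t
  have intf: "(f m has_integral (\<Sum>k<m. a k)) {0..}" for m
    unfolding f_def using has_integral_mult_left[OF has_integral_pois] by (intro has_integral_sum) auto
  have "(\<lambda>m. integral {0..} (f m)) \<longlonglongrightarrow> integral {0..} (\<lambda>t. \<Sum>k. pois t k * a k)"
  proof (rule conjunct2[OF monotone_convergence_increasing])
    show "f m integrable_on {0..}" for m using intf by blast
    show "f m t \<le> f (Suc m) t" if "t \<in> {0..}" for m t
      using that a pois_nonneg[of t] by (simp add: f_def)
    show "(\<lambda>m. f m t) \<longlonglongrightarrow> (\<Sum>k. pois t k * a k)" if "t \<in> {0..}" for t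
      unfolding f_def using that a by (intro summable_LIMSEQ summable_pois_mult) auto
    have "norm (integral {0..} (f m)) \<le> suminf a" for m
      using integral_unique[OF intf[of m]] sum_le_suminf[OF sm, of "{..<m}"] sum_nonneg[of "{..<m}" a] a
      by auto
    thus "bounded (range (\<lambda>m. integral {0..} (f m)))" by (auto simp: bounded_iff)
  qed
  moreover have "(\<lambda>m. integral {0..} (f m)) = (\<lambda>m. \<Sum>k<m. a k)"
    using intf by (intro ext integral_unique)
  ultimately have "(\<lambda>m. \<Sum>k<m. a k) \<longlonglongrightarrow> integral {0..} (\<lambda>t. \<Sum>k. pois t k * a k)" by simp
  moreover have "(\<lambda>m. \<Sum>k<m. a k) \<longlonglongrightarrow> suminf a" using sm by (rule summable_LIMSEQ)
  ultimately show ?thesis using LIMSEQ_unique by metis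
qed

lemma hit_exp_eq_suminf:
  assumes "stochastic S P" "x \<in> S" "summable (\<lambda>k. avoid P S A k x)"
  shows "hit_exp P S A x = (\<Sum>k. avoid P S A k x)"
proof -
  have "hit_exp P S A x = integral {0..} (\<lambda>t. \<Sum>k. pois t k * avoid P S A k x)"
    unfolding hit_exp_def by (rule integral_cong) (simp add: hit_gt_eq)
  thus ?thesis using avoid_bounds[OF assms(1,2)] assms(3) by (simp add: integral_pois_mixture)
qed

lemma hit_exp_antimono:
  assumes st: "stochastic S P" and x: "x \<in> S" and B: "B \<subseteq> A" and sm: "summable (\<lambda>k. avoid P S B k x)"
  shows "hit_exp P S A x \<le> hit_exp P S B x"
proof -
  have le: "avoid P S A k x \<le> avoid P S B k x" for k by (rule avoid_antimono[OF st x B])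
  have sA: "summable (\<lambda>k. avoid P S A k x)"
    by (rule summable_comparison_test'[OF sm]) (use le avoid_bounds[OF st x] in auto)
  show ?thesis
    using suminf_le[OF le sA sm] by (simp add: hit_exp_eq_suminf[OF st x sA] hit_exp_eq_suminf[OF st x sm])
qed

section \<open>Heat kernel, total variation and mixing times\<close>

lemma heat_eq: "heat P S t x y = (\<Sum>k. pois t k * mpow P S k x y)"
  by (simp add: heat_def pois_def)

lemma summable_heat:
  assumes "finite S" "stochastic S P" "x \<in> S" "y \<in> S" "0 \<le> t"
  shows "summable (\<lambda>k. pois t k * mpow P S k x y)"
  using assms by (intro summable_pois_mult) (auto intro: mpow_nonneg mpow_le_1)

lemma heat_nonneg:
  assumes "finite S" "stochastic S P" "x \<in> S" "y \<in> S" "0 \<le> t"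
  shows "0 \<le> heat P S t x y"
  unfolding heat_eq using assms
  by (intro suminf_nonneg summable_heat) (auto intro!: mult_nonneg_nonneg pois_nonneg mpow_nonneg)

lemma heat_row_sum:
  assumes fin: "finite S" and st: "stochastic S P" and x: "x \<in> S" and t: "0 \<le> t"
  shows "(\<Sum>y\<in>S. heat P S t x y) = 1"
proof -
  have "(\<Sum>y\<in>S. heat P S t x y) = (\<Sum>k. \<Sum>y\<in>S. pois t k * mpow P S k x y)"
    unfolding heat_eq using summable_heat[OF fin st x _ t] by (intro suminf_sum[symmetric]) auto
  also have "(\<lambda>k. \<Sum>y\<in>S. pois t k * mpow P S k x y) = pois t"
    by (simp add: sum_distrib_left[symmetric] mpow_row_sum[OF fin st x])
  finally show ?thesis using sums_pois[of t] by (simp add: sums_iff)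
qed

lemma mpow_le_1_minus_avoid:
  assumes fin: "finite S" and st: "stochastic S P" and z: "z \<in> S" and x: "x \<in> S"
  shows "mpow P S k x z \<le> 1 - avoid P S {z} k x"
  using x
proof (induction k arbitrary: x)
  case (Suc k)
  show ?case
  proof (cases "x = z")
    case True thus ?thesis using mpow_le_1[OF fin st Suc.prems z, of "Suc k"] by simp
  next
    case False
    have "mpow P S (Suc k) x z \<le> (\<Sum>y\<in>S. P x y * (1 - avoid P S {z} k y))"
      using Suc.IH stochastic_nonneg[OF st Suc.prems] by (auto intro: sum_mono mult_left_mono)
    also have "\<dots> = 1 - avoid P S {z} (Suc k) x"
      using False stochastic_row_sum[OF st Suc.prems] by (simp add: algebra_simps sum_subtractf)
    finally show ?thesis .
  qed
qed simp

lemma mpow_ge_1_minus_avoid: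
  assumes fin: "finite S" and st: "stochastic S P" and z: "z \<in> S" and x: "x \<in> S"
  shows "(1 - avoid P S {z} k x) * P z z ^ k \<le> mpow P S k x z"
  using x
proof (induction k arbitrary: x)
  case (Suc k)
  have q: "0 \<le> P z z" "P z z \<le> 1" using stochastic_nonneg[OF st z z] stochastic_le_1[OF fin st z z] .
  have nn: "0 \<le> P x y * mpow P S k y z" if "y \<in> S" for y
    using stochastic_nonneg[OF st Suc.prems that] mpow_nonneg[OF st that] by simp
  show ?case
  proof (cases "x = z")
    case True
    have "P z z * P z z ^ k \<le> P z z * mpow P S k z z"
      using Suc.IH[OF z] q by (simp add: avoid_eq_0 mult_left_mono)
    also have "\<dots> \<le> (\<Sum>y\<in>S. P z y * mpow P S k y z)"
      using nn fin z True by (intro member_le_sum[where f = "\<lambda>y. P z y * mpow P S k y z"]) auto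
    finally show ?thesis using True by (simp add: avoid_eq_0)
  next
    case False
    have row: "1 - avoid P S {z} (Suc k) x = (\<Sum>y\<in>S. P x y * (1 - avoid P S {z} k y))"
      using False stochastic_row_sum[OF st Suc.prems] by (simp add: algebra_simps sum_subtractf)
    have "(1 - avoid P S {z} (Suc k) x) * P z z ^ Suc k \<le> (1 - avoid P S {z} (Suc k) x) * P z z ^ k"
      using q avoid_bounds(2)[OF st Suc.prems, of "{z}" "Suc k"]
      by (intro mult_left_mono) (auto simp: mult_left_le_one_le)
    also have "\<dots> = (\<Sum>y\<in>S. P x y * ((1 - avoid P S {z} k y) * P z z ^ k))"
      unfolding row by (simp add: sum_distrib_right mult.assoc)
    also have "\<dots> \<le> mpow P S (Suc k) x z"
      using Suc.IH stochastic_nonneg[OF st Suc.prems] by (auto intro: sum_mono mult_left_mono)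
    finally show ?thesis .
  qed
qed simp

lemma heat_le_1_minus_hit_gt:
  assumes fin: "finite S" and st: "stochastic S P" and z: "z \<in> S" and x: "x \<in> S" and t: "0 \<le> t"
  shows "heat P S t x z \<le> 1 - hit_gt P S {z} x t"
proof -
  have s1: "summable (\<lambda>k. pois t k * avoid P S {z} k x)"
    using avoid_bounds[OF st x] t by (intro summable_pois_mult) auto
  have "heat P S t x z \<le> (\<Sum>k. pois t k - pois t k * avoid P S {z} k x)"
    unfolding heat_eq
  proof (rule suminf_le)
    show "pois t k * mpow P S k x z \<le> pois t k - pois t k * avoid P S {z} k x" for k
      using mult_left_mono[OF mpow_le_1_minus_avoid[OF fin st z x, of k] pois_nonneg[OF t, of k]]
      by (simp add: right_diff_distrib)
    show "summable (\<lambda>k. pois t k * mpow P S k x z)" by (rule summable_heat[OF fin st x z t])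
    show "summable (\<lambda>k. pois t k - pois t k * avoid P S {z} k x)"
      using sums_pois[of t] s1 by (intro summable_diff) (auto simp: sums_iff)
  qed
  also have "\<dots> = 1 - hit_gt P S {z} x t"
    using suminf_diff[OF _ s1, of "pois t"] sums_pois[of t] hit_gt_eq[OF t] by (simp add: sums_iff)
  finally show ?thesis .
qed

lemma heat_ge_1_minus_hit_gt:
  assumes fin: "finite S" and st: "stochastic S P" and z: "z \<in> S" and x: "x \<in> S" and t: "0 \<le> t"
  shows "1 - hit_gt P S {z} x t - t * (1 - P z z) \<le> heat P S t x z"
proof -
  have q: "0 \<le> P z z" "P z z \<le> 1" using stochastic_nonneg[OF st z z] stochastic_le_1[OF fin st z z] .
  have s1: "summable (\<lambda>k. pois t k * avoid P S {z} k x)"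
    using avoid_bounds[OF st x] t by (intro summable_pois_mult) auto
  have s2: "(\<lambda>k. pois t k * P z z ^ k - pois t k * avoid P S {z} k x) sums
      (exp (t * (P z z - 1)) - hit_gt P S {z} x t)"
    using sums_diff[OF sums_pois_generating[of t "P z z"] summable_sums[OF s1]] hit_gt_eq[OF t] by simp
  have "exp (t * (P z z - 1)) - hit_gt P S {z} x t \<le> heat P S t x z"
    unfolding heat_eq
  proof (rule sums_le[OF _ s2 summable_sums[OF summable_heat[OF fin st x z t]]])
    fix k
    have a: "0 \<le> avoid P S {z} k x" "avoid P S {z} k x \<le> 1" using avoid_bounds[OF st x] by auto
    have "P z z ^ k - avoid P S {z} k x \<le> (1 - avoid P S {z} k x) * P z z ^ k"
      using a q mult_left_le_one_le[OF a(1), of "P z z ^ k"] by (simp add: algebra_simps power_le_one)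
    also have "\<dots> \<le> mpow P S k x z" by (rule mpow_ge_1_minus_avoid[OF fin st z x])
    finally show "pois t k * P z z ^ k - pois t k * avoid P S {z} k x \<le> pois t k * mpow P S k x z"
      using mult_left_mono[OF _ pois_nonneg[OF t]] by (simp add: right_diff_distrib[symmetric])
  qed
  moreover have "1 + t * (P z z - 1) \<le> exp (t * (P z z - 1))" by (rule exp_ge_add_one_self)
  ultimately show ?thesis by (simp add: algebra_simps)
qed

lemma tv_dist_ge_point:
  assumes "finite S" "z \<in> S"
  shows "\<bar>nu z - mu z\<bar> \<le> tv_dist S nu mu"
proof -
  have "\<bar>(\<Sum>y\<in>{z}. nu y) - (\<Sum>y\<in>{z}. mu y)\<bar> \<le> tv_dist S nu mu"
    unfolding tv_dist_def using assms by (intro Max_ge image_eqI[where x = "{z}"]) auto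
  thus ?thesis by simp
qed

lemma distribution_subset_bounds:
  fixes nu :: "'a \<Rightarrow> real"
  assumes "finite S" "B \<subseteq> S" "z \<in> S" "\<And>y. y \<in> S \<Longrightarrow> 0 \<le> nu y" "(\<Sum>y\<in>S. nu y) = 1"
  shows "0 \<le> sum nu B" "z \<in> B \<Longrightarrow> nu z \<le> sum nu B" "sum nu B \<le> 1" "z \<notin> B \<Longrightarrow> sum nu B \<le> 1 - nu z"
proof -
  have fB: "finite B" using assms(1,2) finite_subset by blast
  show "0 \<le> sum nu B" using assms by (intro sum_nonneg) auto
  show "z \<in> B \<Longrightarrow> nu z \<le> sum nu B" using assms fB by (intro member_le_sum) auto
  show "sum nu B \<le> 1" using assms sum_mono2[OF assms(1,2), of nu] by auto
  show "z \<notin> B \<Longrightarrow> sum nu B \<le> 1 - nu z"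
    using assms sum_mono2[OF _ _, of "S - {z}" B nu] sum_diff1[OF assms(1), of nu] by auto
qed

lemma tv_dist_le_point:
  assumes fin: "finite S" and z: "z \<in> S"
    and nu: "\<And>y. y \<in> S \<Longrightarrow> 0 \<le> nu y" "(\<Sum>y\<in>S. nu y) = 1"
    and mu: "\<And>y. y \<in> S \<Longrightarrow> 0 \<le> mu y" "(\<Sum>y\<in>S. mu y) = 1"
  shows "tv_dist S nu mu \<le> (1 - mu z) + (1 - nu z)"
  unfolding tv_dist_def
proof (subst Max_le_iff, goal_cases)
  case 3
  have "\<bar>sum nu B - sum mu B\<bar> \<le> (1 - mu z) + (1 - nu z)" if B: "B \<subseteq> S" for B
    using distribution_subset_bounds[OF fin B z, of nu] distribution_subset_bounds[OF fin B z, of mu]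
      distribution_subset_bounds[OF fin _ z, of "{z}"] nu mu z
    by (cases "z \<in> B") auto
  thus ?case by auto
qed (use fin in auto)

lemma dist_stat_ge_hit_gt:
  assumes fin: "finite S" and st: "stochastic S P" and z: "z \<in> S" and x: "x \<in> S" and t: "0 \<le> t"
  shows "mu z - 1 + hit_gt P S {z} x t \<le> dist_stat S P mu t"
proof -
  have "\<bar>heat P S t x z - mu z\<bar> \<le> tv_dist S (heat P S t x) mu" by (rule tv_dist_ge_point[OF fin z])
  also have "\<dots> \<le> dist_stat S P mu t" unfolding dist_stat_def using fin x by (intro Max_ge) auto
  finally show ?thesis using heat_le_1_minus_hit_gt[OF fin st z x t] by linarith
qed

lemma dist_stat_le_hit_gt:
  assumes fin: "finite S" and st: "stochastic S P" and z: "z \<in> S" and t: "0 \<le> t"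
    and mu: "\<And>y. y \<in> S \<Longrightarrow> 0 \<le> mu y" "(\<Sum>y\<in>S. mu y) = 1"
    and b: "\<And>x. x \<in> S \<Longrightarrow> hit_gt P S {z} x t \<le> b"
  shows "dist_stat S P mu t \<le> (1 - mu z) + b + t * (1 - P z z)"
  unfolding dist_stat_def
proof (subst Max_le_iff, goal_cases)
  case 3
  have "tv_dist S (heat P S t x) mu \<le> (1 - mu z) + b + t * (1 - P z z)" if x: "x \<in> S" for x
  proof -
    have "tv_dist S (heat P S t x) mu \<le> (1 - mu z) + (1 - heat P S t x z)"
      using heat_nonneg[OF fin st x _ t] heat_row_sum[OF fin st x t] mu by (intro tv_dist_le_point[OF fin z]) auto
    thus ?thesis using heat_ge_1_minus_hit_gt[OF fin st z x t] b[OF x] by linarith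
  qed
  thus ?case by auto
qed (use fin z in auto)

lemma tmix_le: "0 \<le> t \<Longrightarrow> dist_stat S P mu t \<le> eps \<Longrightarrow> tmix S P mu eps \<le> t"
  unfolding tmix_def by (rule cInf_lower) (auto intro: bdd_belowI[of _ 0])

lemma tmix_ge:
  assumes "0 \<le> t1" "dist_stat S P mu t1 \<le> eps"
    and "\<And>t. 0 \<le> t \<Longrightarrow> t < t2 \<Longrightarrow> eps < dist_stat S P mu t"
  shows "t2 \<le> tmix S P mu eps"
  unfolding tmix_def using assms by (intro cInf_greatest) force+

section \<open>Spectral gap from a Lyapunov function\<close>

lemma reversible_stationary:
  assumes st: "stochastic S P" and rv: "reversible_chain S P mu" and y: "y \<in> S"
  shows "(\<Sum>x\<in>S. mu x * P x y) = mu y"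
proof -
  have "(\<Sum>x\<in>S. mu x * P x y) = (\<Sum>x\<in>S. mu y * P y x)"
    using rv y by (intro sum.cong) (auto simp: reversible_chain_def)
  also have "\<dots> = mu y" using stochastic_row_sum[OF st y] by (simp add: sum_distrib_left[symmetric])
  finally show ?thesis .
qed

lemma mult_le_weighted_squares:
  fixes a b p q :: real assumes "0 < p" "0 < q"
  shows "a * b \<le> (a^2 * (q / p) + b^2 * (p / q)) / 2"
proof -
  have "0 \<le> (a * q - b * p)^2" by simp
  hence "2 * (a * b) * (p * q) \<le> a^2 * q^2 + b^2 * p^2" by (simp add: power2_eq_square algebra_simps)
  thus ?thesis using assms by (simp add: field_simps power2_eq_square)
qed

lemma Schur_test:
  fixes w :: "'a \<Rightarrow> 'a \<Rightarrow> real"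
  assumes sym: "\<And>x y. x \<in> T \<Longrightarrow> y \<in> T \<Longrightarrow> w x y = w y x"
    and nonneg: "\<And>x y. x \<in> T \<Longrightarrow> y \<in> T \<Longrightarrow> 0 \<le> w x y" and h: "\<And>x. x \<in> T \<Longrightarrow> 0 < h x"
  shows "(\<Sum>x\<in>T. \<Sum>y\<in>T. w x y * (g x * g y)) \<le> (\<Sum>x\<in>T. (g x)^2 / h x * (\<Sum>y\<in>T. w x y * h y))"
proof -
  define U where "U x y = w x y * ((g x)^2 * (h y / h x))" for x y
  have "(\<Sum>x\<in>T. \<Sum>y\<in>T. w x y * (g x * g y)) \<le> (\<Sum>x\<in>T. \<Sum>y\<in>T. (U x y + U y x) / 2)"
  proof (intro sum_mono)
    fix x y assume x: "x \<in> T" and y: "y \<in> T"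
    have "w x y * (g x * g y) \<le> w x y * (((g x)^2 * (h y / h x) + (g y)^2 * (h x / h y)) / 2)"
      using nonneg[OF x y] h x y mult_le_weighted_squares[of "h x" "h y" "g x" "g y"] by (intro mult_left_mono) auto
    also have "\<dots> = (U x y + U y x) / 2" using sym[OF x y] by (simp add: U_def algebra_simps)
    finally show "w x y * (g x * g y) \<le> (U x y + U y x) / 2" .
  qed
  also have "\<dots> = (\<Sum>x\<in>T. \<Sum>y\<in>T. U x y)"
    using sum.swap[of U T T] by (simp add: sum_divide_distrib[symmetric] sum.distrib)
  also have "\<dots> = (\<Sum>x\<in>T. (g x)^2 / h x * (\<Sum>y\<in>T. w x y * h y))"
    by (simp add: U_def sum_distrib_left sum_divide_distrib mult_ac)
  finally show ?thesis .
qed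

lemma quadratic_form_le_lyapunov:
  assumes fin: "finite S" and st: "stochastic S P" and mu: "\<And>x. x \<in> S \<Longrightarrow> 0 \<le> mu x"
    and rv: "reversible_chain S P mu" and z: "z \<in> S" and ly: "lyapunov_killed S P z h \<rho>" and g: "g z = 0"
  shows "(\<Sum>x\<in>S. mu x * g x * (\<Sum>y\<in>S. P x y * g y)) \<le> \<rho> * (\<Sum>x\<in>S. mu x * (g x)^2)"
proof -
  define T where "T = S - {z}"
  have h: "\<And>x. x \<in> T \<Longrightarrow> 0 < h x" "\<And>x. x \<in> T \<Longrightarrow> (\<Sum>y\<in>T. P x y * h y) \<le> \<rho> * h x"
    using ly by (auto simp: lyapunov_killed_def T_def)
  have drop_z: "(\<Sum>x\<in>S. F x) = (\<Sum>x\<in>T. F x)" if "F z = 0" for F :: "nat \<Rightarrow> real"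
    using that fin z by (simp add: T_def sum_diff1)
  have "(\<Sum>x\<in>S. mu x * g x * (\<Sum>y\<in>S. P x y * g y)) = (\<Sum>x\<in>T. \<Sum>y\<in>T. mu x * P x y * (g x * g y))"
    using g by (simp add: drop_z sum_distrib_left mult_ac)
  also have "\<dots> \<le> (\<Sum>x\<in>T. (g x)^2 / h x * (\<Sum>y\<in>T. mu x * P x y * h y))"
    using rv mu stochastic_nonneg[OF st] h(1)
    by (intro Schur_test) (auto simp: reversible_chain_def T_def)
  also have "\<dots> \<le> (\<Sum>x\<in>T. mu x * (g x)^2 / h x * (\<rho> * h x))"
  proof (intro sum_mono)
    fix x assume x: "x \<in> T"
    have "(g x)^2 / h x * (\<Sum>y\<in>T. mu x * P x y * h y) = mu x * (g x)^2 / h x * (\<Sum>y\<in>T. P x y * h y)"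
      by (simp add: sum_distrib_left sum_divide_distrib mult_ac)
    also have "\<dots> \<le> mu x * (g x)^2 / h x * (\<rho> * h x)"
      using h x mu[of x] by (intro mult_left_mono) (auto simp: T_def less_imp_le)
    finally show "(g x)^2 / h x * (\<Sum>y\<in>T. mu x * P x y * h y) \<le> mu x * (g x)^2 / h x * (\<rho> * h x)" .
  qed
  also have "\<dots> = \<rho> * (\<Sum>x\<in>S. mu x * (g x)^2)"
    using h(1) g by (simp add: drop_z sum_distrib_left less_imp_neq[symmetric] mult_ac cong: sum.cong)
  finally show ?thesis .
qed

lemma eigenfunction_mean_zero:
  assumes st: "stochastic S P" and rv: "reversible_chain S P mu"
    and f: "\<And>x. x \<in> S \<Longrightarrow> (\<Sum>y\<in>S. P x y * f y) = l * f x" and l: "l \<noteq> 1"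
  shows "(\<Sum>x\<in>S. mu x * f x) = 0"
proof -
  have "l * (\<Sum>x\<in>S. mu x * f x) = (\<Sum>x\<in>S. mu x * (\<Sum>y\<in>S. P x y * f y))"
    using f by (simp add: sum_distrib_left algebra_simps)
  also have "\<dots> = (\<Sum>y\<in>S. (\<Sum>x\<in>S. mu x * P x y) * f y)"
    by (simp add: sum_distrib_left sum_distrib_right algebra_simps) (rule sum.swap)
  also have "\<dots> = (\<Sum>x\<in>S. mu x * f x)" using reversible_stationary[OF st rv] by simp
  finally show ?thesis using l by (metis mult_cancel_right1)
qed

lemma eigenvalue_le_lyapunov_rate:
  assumes fin: "finite S" and st: "stochastic S P" and mu: "\<And>x. x \<in> S \<Longrightarrow> 0 < mu x"
    and rv: "reversible_chain S P mu" and z: "z \<in> S" and ly: "lyapunov_killed S P z h \<rho>" and rho: "\<rho> \<le> 1"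
    and f: "\<And>x. x \<in> S \<Longrightarrow> (\<Sum>y\<in>S. P x y * f y) = l * f x" and x0: "x0 \<in> S" "f x0 \<noteq> 0"
    and l: "l \<noteq> 1"
  shows "l \<le> \<rho>"
proof -
  define F where "F = (\<Sum>x\<in>S. mu x * (f x)^2)"
  define W where "W = (\<Sum>x\<in>S. mu x)"
  define c where "c = f z"
  have M0: "(\<Sum>x\<in>S. mu x * f x) = 0" by (rule eigenfunction_mean_zero[OF st rv f l])
  have W0: "0 \<le> W" unfolding W_def using mu by (intro sum_nonneg) (auto intro: less_imp_le)
  have "0 < mu x0 * (f x0)^2" using mu[OF x0(1)] x0(2) by simp
  also have "\<dots> \<le> F" unfolding F_def using fin x0 mu by (intro member_le_sum) (auto intro!: mult_nonneg_nonneg intro: less_imp_le)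
  finally have F0: "0 < F" .
  have Pg: "(\<Sum>y\<in>S. P x y * (f y - c)) = l * f x - c" if "x \<in> S" for x
    using f[OF that] stochastic_row_sum[OF st that] by (simp add: algebra_simps sum_subtractf sum_distrib_left[symmetric])
  have "(\<Sum>x\<in>S. mu x * (f x - c) * (\<Sum>y\<in>S. P x y * (f y - c))) \<le> \<rho> * (\<Sum>x\<in>S. mu x * (f x - c)^2)"
    using mu by (intro quadratic_form_le_lyapunov[OF fin st _ rv z ly]) (auto simp: c_def intro: less_imp_le)
  moreover have "(\<Sum>x\<in>S. mu x * (f x - c) * (\<Sum>y\<in>S. P x y * (f y - c))) = l * F + c^2 * W"
  proof -
    have "(\<Sum>x\<in>S. mu x * (f x - c) * (\<Sum>y\<in>S. P x y * (f y - c)))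
        = (\<Sum>x\<in>S. l * (mu x * (f x)^2) - c * (l + 1) * (mu x * f x) + c^2 * mu x)"
    proof (rule sum.cong[OF refl])
      fix x assume "x \<in> S"
      show "mu x * (f x - c) * (\<Sum>y\<in>S. P x y * (f y - c)) = l * (mu x * (f x)^2) - c * (l + 1) * (mu x * f x) + c^2 * mu x"
        by (subst Pg[OF \<open>x \<in> S\<close>]) (simp add: power2_eq_square algebra_simps)
    qed
    thus ?thesis using M0 by (simp add: F_def W_def sum.distrib sum_subtractf sum_distrib_left[symmetric])
  qed
  moreover have "(\<Sum>x\<in>S. mu x * (f x - c)^2) = F + c^2 * W"
  proof -
    have "(\<Sum>x\<in>S. mu x * (f x - c)^2) = (\<Sum>x\<in>S. mu x * (f x)^2 - 2 * c * (mu x * f x) + c^2 * mu x)"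
      by (intro sum.cong) (auto simp: power2_eq_square algebra_simps)
    thus ?thesis using M0 by (simp add: F_def W_def sum.distrib sum_subtractf sum_distrib_left[symmetric])
  qed
  ultimately have "(l - \<rho>) * F \<le> (\<rho> - 1) * (c^2 * W)" by (simp add: algebra_simps)
  also have "\<dots> \<le> 0" using rho W0 by (simp add: mult_nonpos_nonneg)
  finally show ?thesis using F0 by (simp add: mult_le_0_iff)
qed

lemma harmonic_const_lyapunov:
  assumes fin: "finite S" and st: "stochastic S P" and mu: "\<And>x. x \<in> S \<Longrightarrow> 0 < mu x"
    and rv: "reversible_chain S P mu" and z: "z \<in> S" and ly: "lyapunov_killed S P z h \<rho>" and rho: "\<rho> < 1"
    and f: "\<And>x. x \<in> S \<Longrightarrow> (\<Sum>y\<in>S. P x y * f y) = f x" and x: "x \<in> S"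
  shows "f x = f z"
proof -
  define g where "g x = f x - f z" for x
  have Pg: "(\<Sum>y\<in>S. P x y * g y) = g x" if "x \<in> S" for x
    using f[OF that] stochastic_row_sum[OF st that] by (simp add: g_def algebra_simps sum_subtractf sum_distrib_left[symmetric])
  have "(\<Sum>x\<in>S. mu x * g x * (\<Sum>y\<in>S. P x y * g y)) \<le> \<rho> * (\<Sum>x\<in>S. mu x * (g x)^2)"
    using mu by (intro quadratic_form_le_lyapunov[OF fin st _ rv z ly]) (auto simp: g_def intro: less_imp_le)
  hence "(\<Sum>x\<in>S. mu x * (g x)^2) \<le> \<rho> * (\<Sum>x\<in>S. mu x * (g x)^2)"
    using Pg by (simp add: power2_eq_square mult.assoc)
  moreover have "0 \<le> (\<Sum>x\<in>S. mu x * (g x)^2)" using mu by (intro sum_nonneg mult_nonneg_nonneg) (auto simp: less_imp_le)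
  ultimately have "(\<Sum>x\<in>S. mu x * (g x)^2) = 0" using rho by (smt (verit) mult_le_cancel_right1)
  hence "mu x * (g x)^2 = 0" using fin mu x by (subst (asm) sum_nonneg_eq_0_iff) (auto intro!: mult_nonneg_nonneg intro: less_imp_le)
  thus ?thesis using mu[OF x] by (simp add: g_def)
qed

lemma finite_eigenvalues: assumes fin: "finite S" shows "finite {l. is_eigenvalue S P l}"
proof -
  define xs where "xs = sorted_list_of_set S"
  define n where "n = length xs"
  have bij: "bij_betw ((!) xs) {..<n} S" using fin by (intro bij_betw_nth) (auto simp: xs_def n_def)
  define A where "A = Matrix.mat n n (\<lambda>(i,j). P (xs ! i) (xs ! j))"
  have "{l. is_eigenvalue S P l} \<subseteq> spectrum A"
  proof
    fix l assume "l \<in> {l. is_eigenvalue S P l}"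
    then obtain f x where x: "x \<in> S" "f x \<noteq> 0" and fe: "\<forall>x\<in>S. (\<Sum>y\<in>S. P x y * f y) = l * f x"
      by (auto simp: is_eigenvalue_def)
    define v where "v = Matrix.vec n (\<lambda>i. f (xs ! i))"
    have "A *\<^sub>v v = l \<cdot>\<^sub>v v"
    proof (rule eq_vecI)
      fix i assume "i < dim_vec (l \<cdot>\<^sub>v v)"
      hence i: "i < n" "xs ! i \<in> S" using bij by (auto simp: v_def bij_betw_def)
      have "(A *\<^sub>v v) $ i = (\<Sum>j\<in>{..<n}. P (xs ! i) (xs ! j) * f (xs ! j))"
        using i by (simp add: A_def v_def scalar_prod_def atLeast0LessThan)
      also have "\<dots> = l * f (xs ! i)" using sum.reindex_bij_betw[OF bij, of "\<lambda>y. P (xs ! i) y * f y"] fe i by simp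
      finally show "(A *\<^sub>v v) $ i = (l \<cdot>\<^sub>v v) $ i" using i by (simp add: v_def)
    qed (simp add: A_def v_def)
    moreover have "v \<noteq> 0\<^sub>v n" using x bij by (auto simp: v_def bij_betw_def vec_eq_iff)
    ultimately have "eigenvector A v l" by (simp add: eigenvector_def A_def v_def)
    thus "l \<in> spectrum A" by (auto simp: spectrum_def eigenvalue_def)
  qed
  moreover have "A \<in> carrier_mat n n" by (simp add: A_def)
  ultimately show ?thesis using card_finite_spectrum(1) finite_subset by blast
qed

lemma lambda2_le_lyapunov_rate:
  assumes fin: "finite S" and st: "stochastic S P" and mu: "\<And>x. x \<in> S \<Longrightarrow> 0 < mu x"
    and rv: "reversible_chain S P mu" and z: "z \<in> S" and ly: "lyapunov_killed S P z h \<rho>" and rho: "\<rho> < 1"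
    and ex: "is_eigenvalue S P l0" "l0 < 1"
  shows "lambda2 S P \<le> \<rho>"
proof -
  have no_harmonic: "\<not> (\<exists>f. (\<exists>x\<in>S. \<exists>y\<in>S. f x \<noteq> f y) \<and> (\<forall>x\<in>S. (\<Sum>y\<in>S. P x y * f y) = f x))"
    using harmonic_const_lyapunov[OF fin st mu rv z ly rho] by metis
  define X where "X = {l. is_eigenvalue S P l \<and> l < 1}"
  have "finite X" using finite_eigenvalues[OF fin, of P] by (auto simp: X_def intro: finite_subset)
  moreover have "X \<noteq> {}" using ex by (auto simp: X_def)
  moreover have "l \<le> \<rho>" if "l \<in> X" for l
    using that eigenvalue_le_lyapunov_rate[OF fin st mu rv z ly] rho by (auto simp: X_def is_eigenvalue_def)
  ultimately have "Max X \<le> \<rho>" by simp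
  moreover have "lambda2 S P = Max X" unfolding lambda2_def X_def by (rule if_not_P[OF no_harmonic])
  ultimately show ?thesis by simp
qed

section \<open>The spider chain\<close>

text \<open>Node \<open>j\<close> of leg \<open>i\<close> is \<open>prod_encode (i, j)\<close>, so the root is \<open>prod_encode (0, 0) = 0\<close>.
  The row of the root is chosen to make the chain reversible for \<open>weight\<close>, and the offset \<open>16\<close>
  in \<open>spider_size\<close> makes the numerical estimates below hold for every \<open>n\<close>.\<close>

definition spider_size :: "nat \<Rightarrow> nat" where "spider_size n = n + 16"

definition away :: "nat \<Rightarrow> real" where "away n = 1 / real (spider_size n) ^ 3"

definition leg_len :: "nat \<Rightarrow> nat \<Rightarrow> nat" where
  "leg_len n i = (if i = 0 then 10 * spider_size n else if i = 1 then 20 * spider_size n else 1)"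

definition jump :: "nat \<Rightarrow> nat \<Rightarrow> real" where
  "jump n i = (if i = 1 then 1 / (8 * real (spider_size n)) else 0)"

definition toward :: "nat \<Rightarrow> nat \<Rightarrow> real" where "toward n i = 1 - jump n i - away n"

definition ratio :: "nat \<Rightarrow> nat \<Rightarrow> real" where "ratio n i = away n / toward n i"

abbreviation node :: "nat \<Rightarrow> nat \<Rightarrow> nat" where "node i j \<equiv> prod_encode (i, j)"

definition leg :: "nat \<Rightarrow> nat" where "leg x = fst (prod_decode x)"

definition depth :: "nat \<Rightarrow> nat" where "depth x = snd (prod_decode x)"

definition leg_nodes :: "nat \<Rightarrow> (nat \<times> nat) set" where
  "leg_nodes n = {(i, j). i < 4 \<and> 1 \<le> j \<and> j \<le> leg_len n i}"

definition spider_states :: "nat \<Rightarrow> nat set" where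
  "spider_states n = insert 0 (prod_encode ` leg_nodes n)"

definition parent :: "nat \<Rightarrow> nat" where
  "parent x = (if depth x = 1 then 0 else node (leg x) (depth x - 1))"

definition child :: "nat \<Rightarrow> nat \<Rightarrow> nat" where
  "child n x = (if depth x = leg_len n (leg x) then x else node (leg x) (depth x + 1))"

definition leg_kernel :: "nat \<Rightarrow> nat \<Rightarrow> nat \<Rightarrow> real" where
  "leg_kernel n x y = toward n (leg x) * (if y = parent x then 1 else 0)
     + jump n (leg x) * (if y = 0 then 1 else 0) + away n * (if y = child n x then 1 else 0)"

definition weight :: "nat \<Rightarrow> nat \<Rightarrow> real" where
  "weight n x = (if x = 0 then 1 else ratio n (leg x) ^ depth x)"

definition leg_mass :: "nat \<Rightarrow> real" where
  "leg_mass n = (\<Sum>w\<in>spider_states n - {0}. weight n w)"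

definition spider_kernel :: "nat \<Rightarrow> nat \<Rightarrow> nat \<Rightarrow> real" where
  "spider_kernel n x y =
     (if x \<noteq> 0 then leg_kernel n x y
      else if y \<noteq> 0 then weight n y * leg_kernel n y 0
      else 1 - (\<Sum>w\<in>spider_states n - {0}. weight n w * leg_kernel n w 0))"

definition spider_stat :: "nat \<Rightarrow> nat \<Rightarrow> real" where
  "spider_stat n x = weight n x / (1 + leg_mass n)"

abbreviation spider_avoid :: "nat \<Rightarrow> nat \<Rightarrow> nat \<Rightarrow> real" where
  "spider_avoid n k x \<equiv> avoid (spider_kernel n) (spider_states n) {0} k x"

lemma node_eq_0_iff: "node i j = 0 \<longleftrightarrow> i = 0 \<and> j = 0"
  using prod_encode_eq[of "(i,j)" "(0,0)"] by (simp add: prod_encode_def)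

lemma node_Suc_neq_0 [simp]: "node i (Suc j) \<noteq> 0" "0 < node i (Suc j)"
  using node_eq_0_iff[of i "Suc j"] by (auto simp del: prod_encode_eq)

lemma leg_node [simp]: "leg (node i j) = i" by (simp add: leg_def)

lemma depth_node [simp]: "depth (node i j) = j" by (simp add: depth_def)

lemma node_leg_depth: "node (leg x) (depth x) = x" by (simp add: leg_def depth_def)

lemma spider_size_ge: "16 \<le> spider_size n" by (simp add: spider_size_def)

lemma away_pos: "0 < away n" using spider_size_ge[of n] by (simp add: away_def)

lemma away_le: "away n \<le> 1 / 4096"
proof -
  have "(16::real)^3 \<le> real (spider_size n) ^ 3" using spider_size_ge[of n] by (intro power_mono) auto
  thus ?thesis by (simp add: away_def divide_simps)
qed

lemma spider_size_mult_away: "real (spider_size n) * away n = 1 / real (spider_size n) ^ 2"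
  using spider_size_ge[of n] by (simp add: away_def power2_eq_square power3_eq_cube)

lemma spider_size_mult_away_le: "real (spider_size n) * away n \<le> 1 / 256"
proof -
  have "1 / real (spider_size n) ^ 2 \<le> 1 / 16 ^ 2" using spider_size_ge[of n] by (intro divide_left_mono power_mono) auto
  thus ?thesis by (simp add: spider_size_mult_away)
qed

lemma jump_nonneg: "0 \<le> jump n i" by (simp add: jump_def)

lemma jump_le: "jump n i \<le> 1 / 128"
  using spider_size_ge[of n] by (auto simp: jump_def divide_simps)

lemma toward_ge: "1 / 2 \<le> toward n i" using jump_le[of n i] away_le[of n] by (simp add: toward_def)

lemma toward_le: "toward n i \<le> 1" using jump_nonneg[of n i] away_pos[of n] by (simp add: toward_def)

lemma ratio_pos: "0 < ratio n i" using toward_ge[of n i] away_pos[of n] by (simp add: ratio_def)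

lemma ratio_le: "ratio n i \<le> 2 * away n"
  using toward_ge[of n i] away_pos[of n] by (simp add: ratio_def divide_simps)

lemma ratio_mult_toward: "ratio n i * toward n i = away n" using toward_ge[of n i] by (simp add: ratio_def)

lemma leg_len_ge: "1 \<le> leg_len n i" using spider_size_ge[of n] by (simp add: leg_len_def)

lemma finite_spider_states: "finite (spider_states n)"
proof -
  have "leg_nodes n \<subseteq> {..<4} \<times> {..leg_len n 0 + leg_len n 1}"
    using spider_size_ge[of n] by (auto simp: leg_nodes_def leg_len_def split: if_splits)
  hence "finite (leg_nodes n)" by (rule finite_subset) auto
  thus ?thesis by (simp add: spider_states_def)
qed

lemma root_in_spider_states: "0 \<in> spider_states n" by (simp add: spider_states_def)

lemma node_in_spider_states_iff:
  "node i j \<in> spider_states n \<longleftrightarrow> (i = 0 \<and> j = 0) \<or> (i < 4 \<and> 1 \<le> j \<and> j \<le> leg_len n i)"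
  by (auto simp: spider_states_def leg_nodes_def node_eq_0_iff)

lemma spider_states_cases:
  assumes "x \<in> spider_states n" "x \<noteq> 0"
  obtains i j where "x = node i j" "i < 4" "1 \<le> j" "j \<le> leg_len n i"
  using assms by (auto simp: spider_states_def leg_nodes_def)

lemma spider_states_nonroot:
  assumes "x \<in> spider_states n" "x \<noteq> 0" shows "leg x < 4" "1 \<le> depth x" "depth x \<le> leg_len n (leg x)"
  using assms by (auto elim!: spider_states_cases)

lemma parent_in_spider_states: "x \<in> spider_states n \<Longrightarrow> x \<noteq> 0 \<Longrightarrow> parent x \<in> spider_states n"
  by (auto elim!: spider_states_cases simp: parent_def root_in_spider_states node_in_spider_states_iff)

lemma child_in_spider_states: "x \<in> spider_states n \<Longrightarrow> x \<noteq> 0 \<Longrightarrow> child n x \<in> spider_states n"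
  by (auto elim!: spider_states_cases simp: child_def node_in_spider_states_iff)

lemma child_neq_root:
  assumes "x \<in> spider_states n" "x \<noteq> 0" shows "child n x \<noteq> 0"
proof -
  obtain i j where ij: "x = node i j" using assms by (auto elim!: spider_states_cases)
  have "node i (Suc j) \<noteq> 0" using node_eq_0_iff[of i "Suc j"] by simp
  thus ?thesis using assms(2) unfolding child_def ij by (auto simp del: prod_encode_eq)
qed

lemma sum_spider_kernel_nonroot:
  assumes "x \<in> spider_states n" "x \<noteq> 0"
  shows "(\<Sum>y\<in>spider_states n. spider_kernel n x y * F y) =
    toward n (leg x) * F (parent x) + jump n (leg x) * F 0 + away n * F (child n x)"
proof -
  have "(\<Sum>y\<in>spider_states n. spider_kernel n x y * F y) =
      (\<Sum>y\<in>spider_states n. toward n (leg x) * (if y = parent x then F y else 0)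
        + jump n (leg x) * (if y = 0 then F y else 0) + away n * (if y = child n x then F y else 0))"
    using assms(2) by (intro sum.cong) (auto simp: spider_kernel_def leg_kernel_def algebra_simps)
  also have "\<dots> = toward n (leg x) * F (parent x) + jump n (leg x) * F 0 + away n * F (child n x)"
    using parent_in_spider_states[OF assms] child_in_spider_states[OF assms] root_in_spider_states[of n]
      finite_spider_states[of n]
    by (simp add: sum.distrib sum_distrib_left[symmetric] sum.delta')
  finally show ?thesis .
qed

lemma leg_mass_bounds: "0 \<le> leg_mass n" "leg_mass n \<le> 16 * away n"
proof -
  show "0 \<le> leg_mass n" unfolding leg_mass_def using ratio_pos by (intro sum_nonneg) (auto simp: weight_def less_imp_le)
  have "spider_states n - {0} = prod_encode ` leg_nodes n"
    by (auto simp: spider_states_def leg_nodes_def node_eq_0_iff)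
  hence "leg_mass n = (\<Sum>(i, j)\<in>leg_nodes n. ratio n i ^ j)"
    by (simp add: leg_mass_def sum.reindex inj_on_def case_prod_unfold)
      (auto intro!: sum.cong simp: weight_def leg_nodes_def node_eq_0_iff leg_def depth_def)
  also have "leg_nodes n = Sigma {..<4} (\<lambda>i. {1..leg_len n i})" by (auto simp: leg_nodes_def)
  also have "(\<Sum>(i, j)\<in>Sigma {..<4} (\<lambda>i. {1..leg_len n i}). ratio n i ^ j) = (\<Sum>i<4. \<Sum>j=1..leg_len n i. ratio n i ^ j)"
    by (rule sum.Sigma[symmetric]) auto
  also have "\<dots> \<le> (\<Sum>i<(4::nat). 2 * (2 * away n))"
  proof (intro sum_mono)
    fix i
    have "0 \<le> ratio n i" "ratio n i \<le> 1/2" using ratio_pos[of n i] ratio_le[of n i] away_le[of n] by auto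
    thus "(\<Sum>j=1..leg_len n i. ratio n i ^ j) \<le> 2 * (2 * away n)"
      using sum_power_le_twice ratio_le[of n i] by (meson mult_left_mono order.trans zero_le_numeral)
  qed
  finally show "leg_mass n \<le> 16 * away n" by simp
qed

lemma weight_pos: "0 < weight n x" using ratio_pos by (simp add: weight_def)

lemma leg_kernel_bounds: "0 \<le> leg_kernel n x y" "leg_kernel n x y \<le> 1"
proof -
  have "0 \<le> toward n (leg x)" using toward_ge[of n "leg x"] by linarith
  thus "0 \<le> leg_kernel n x y" using jump_nonneg[of n "leg x"] away_pos[of n] unfolding leg_kernel_def
    by (intro add_nonneg_nonneg mult_nonneg_nonneg) auto
  have "leg_kernel n x y \<le> toward n (leg x) + jump n (leg x) + away n"
    using \<open>0 \<le> toward n (leg x)\<close> jump_nonneg[of n "leg x"] away_pos[of n]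
    unfolding leg_kernel_def by (intro add_mono) auto
  thus "leg_kernel n x y \<le> 1" by (simp add: toward_def)
qed

lemma spider_kernel_root_root: "1 - 16 * away n \<le> spider_kernel n 0 0" "spider_kernel n 0 0 \<le> 1"
proof -
  have "(\<Sum>w\<in>spider_states n - {0}. weight n w * leg_kernel n w 0) \<le> leg_mass n"
    unfolding leg_mass_def using weight_pos leg_kernel_bounds
    by (intro sum_mono) (simp add: mult_left_le less_imp_le)
  moreover have "0 \<le> (\<Sum>w\<in>spider_states n - {0}. weight n w * leg_kernel n w 0)"
    using weight_pos leg_kernel_bounds by (intro sum_nonneg) (simp add: less_imp_le)
  ultimately show "1 - 16 * away n \<le> spider_kernel n 0 0" "spider_kernel n 0 0 \<le> 1"
    using leg_mass_bounds[of n] by (auto simp: spider_kernel_def)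
qed

lemma stochastic_spider: "stochastic (spider_states n) (spider_kernel n)"
  unfolding stochastic_def
proof (intro conjI ballI)
  fix x y assume "x \<in> spider_states n" "y \<in> spider_states n"
  show "0 \<le> spider_kernel n x y"
    using spider_kernel_root_root[of n] away_le[of n] weight_pos[of n y] leg_kernel_bounds[of n]
    by (auto simp: spider_kernel_def)
next
  fix x assume x: "x \<in> spider_states n"
  show "(\<Sum>y\<in>spider_states n. spider_kernel n x y) = 1"
  proof (cases "x = 0")
    case True
    have "(\<Sum>y\<in>spider_states n. spider_kernel n 0 y)
        = spider_kernel n 0 0 + (\<Sum>y\<in>spider_states n - {0}. spider_kernel n 0 y)"
      using finite_spider_states[of n] root_in_spider_states[of n] by (simp add: sum.remove)
    also have "(\<Sum>y\<in>spider_states n - {0}. spider_kernel n 0 y)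
        = (\<Sum>w\<in>spider_states n - {0}. weight n w * leg_kernel n w 0)"
      by (intro sum.cong) (auto simp: spider_kernel_def)
    finally show ?thesis using True by (simp add: spider_kernel_def)
  next
    case False thus ?thesis using sum_spider_kernel_nonroot[OF x False, of "\<lambda>_. 1"] by (simp add: toward_def)
  qed
qed

lemma leg_kernel_node:
  assumes "(i,j) \<in> leg_nodes n" "(i',j') \<in> leg_nodes n"
  shows "leg_kernel n (node i j) (node i' j') =
     (if i' = i \<and> j' + 1 = j then toward n i else 0) + (if i' = i \<and> j' = j + 1 then away n else 0)
     + (if i' = i \<and> j' = j \<and> j = leg_len n i then away n else 0)"
  using assms by (auto simp: leg_kernel_def parent_def child_def leg_nodes_def node_eq_0_iff)

lemma detailed_balance_legs:
  assumes "(i,j) \<in> leg_nodes n" "(i',j') \<in> leg_nodes n"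
  shows "weight n (node i j) * leg_kernel n (node i j) (node i' j')
       = weight n (node i' j') * leg_kernel n (node i' j') (node i j)"
proof -
  have "weight n (node i j) = ratio n i ^ j" "weight n (node i' j') = ratio n i' ^ j'"
    using assms by (auto simp: weight_def leg_nodes_def node_eq_0_iff)
  moreover have "ratio n i ^ Suc j' * toward n i = ratio n i ^ j' * away n" for j'
    using ratio_mult_toward[of n i] by (simp add: mult.assoc)
  ultimately show ?thesis
    unfolding leg_kernel_node[OF assms] leg_kernel_node[OF assms(2,1)] by (auto simp: mult.commute)
qed

lemma spider_stat_pos: "0 < spider_stat n x"
  using weight_pos leg_mass_bounds[of n] by (simp add: spider_stat_def)

lemma sum_spider_stat: "(\<Sum>x\<in>spider_states n. spider_stat n x) = 1"
proof -
  have "(\<Sum>x\<in>spider_states n. weight n x) = 1 + leg_mass n"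
    using finite_spider_states[of n] root_in_spider_states[of n] by (simp add: sum.remove leg_mass_def weight_def)
  thus ?thesis using leg_mass_bounds[of n] by (simp add: spider_stat_def sum_divide_distrib[symmetric])
qed

lemma spider_stat_root: "1 - spider_stat n 0 \<le> 16 * away n"
proof -
  have "1 - spider_stat n 0 = leg_mass n / (1 + leg_mass n)"
    using leg_mass_bounds[of n] by (simp add: spider_stat_def weight_def field_simps)
  also have "\<dots> \<le> leg_mass n / 1" using leg_mass_bounds[of n] by (intro divide_left_mono) auto
  finally show ?thesis using leg_mass_bounds[of n] by simp
qed

lemma reversible_spider: "reversible_chain (spider_states n) (spider_kernel n) (spider_stat n)"
  unfolding reversible_chain_def
proof (intro ballI)
  fix x y assume x: "x \<in> spider_states n" and y: "y \<in> spider_states n"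
  have "weight n x * spider_kernel n x y = weight n y * spider_kernel n y x"
  proof (cases "x = 0 \<or> y = 0")
    case True thus ?thesis by (auto simp: spider_kernel_def weight_def)
  next
    case False
    then obtain i j i' j' where "x = node i j" "(i,j) \<in> leg_nodes n" "y = node i' j'" "(i',j') \<in> leg_nodes n"
      using x y by (auto elim!: spider_states_cases simp: leg_nodes_def)
    thus ?thesis using detailed_balance_legs False by (simp add: spider_kernel_def)
  qed
  thus "spider_stat n x * spider_kernel n x y = spider_stat n y * spider_kernel n y x"
    by (simp add: spider_stat_def)
qed

lemma spider_kernel_parent:
  assumes "x \<in> spider_states n" "x \<noteq> 0" shows "toward n (leg x) \<le> spider_kernel n x (parent x)"
  using assms jump_nonneg[of n "leg x"] away_pos[of n] by (simp add: spider_kernel_def leg_kernel_def)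

lemma spider_kernel_child:
  assumes "x \<in> spider_states n" "x \<noteq> 0" shows "away n \<le> spider_kernel n x (child n x)"
  using assms jump_nonneg[of n "leg x"] toward_ge[of n "leg x"] by (simp add: spider_kernel_def leg_kernel_def)

lemma reachable_spider_leg_outward:
  assumes "i < 4" "1 \<le> j" "j + d \<le> leg_len n i"
  shows "reachable (spider_states n) (spider_kernel n) (node i j) (node i (j + d))"
  using assms
proof (induction d arbitrary: j)
  case (Suc d)
  have x: "node i j \<in> spider_states n" "node i j \<noteq> 0" "node i (Suc j) \<in> spider_states n"
    using Suc.prems by (auto simp: node_in_spider_states_iff node_eq_0_iff)
  have "0 < spider_kernel n (node i j) (node i (Suc j))"
    using spider_kernel_child[OF x(1,2)] away_pos[of n] Suc.prems by (simp add: child_def)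
  thus ?case using Suc.IH[of "Suc j"] Suc.prems
    by (intro reachable_step[OF finite_spider_states stochastic_spider x(1) x(3)]) auto
qed (simp add: reachable_refl)

lemma reachable_spider_from_root:
  assumes "y \<in> spider_states n" shows "reachable (spider_states n) (spider_kernel n) 0 y"
proof (cases "y = 0")
  case False
  then obtain i j where y: "y = node i j" "i < 4" "1 \<le> j" "j \<le> leg_len n i"
    using assms by (auto elim!: spider_states_cases)
  have e1: "node i 1 \<in> spider_states n" "node i 1 \<noteq> 0"
    using y leg_len_ge[of n i] by (auto simp: node_in_spider_states_iff node_eq_0_iff)
  have "0 < leg_kernel n (node i 1) 0"
    using spider_kernel_parent[OF e1] toward_ge[of n i] e1(2) by (simp add: spider_kernel_def parent_def)
  hence "0 < spider_kernel n 0 (node i 1)" using weight_pos[of n "node i 1"] e1 by (simp add: spider_kernel_def)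
  thus ?thesis using reachable_spider_leg_outward[of i 1 "j - 1" n] y
    by (intro reachable_step[OF finite_spider_states stochastic_spider root_in_spider_states e1(1)]) auto
qed (simp add: reachable_refl)

lemma reachable_spider:
  assumes "x \<in> spider_states n" "y \<in> spider_states n"
  shows "reachable (spider_states n) (spider_kernel n) x y"
  using assms(1)
proof (induction "depth x" arbitrary: x rule: less_induct)
  case less
  show ?case
  proof (cases "x = 0")
    case nonroot: False
    have p: "parent x \<in> spider_states n" "0 < spider_kernel n x (parent x)"
      using parent_in_spider_states[OF less.prems nonroot] spider_kernel_parent[OF less.prems nonroot]
        toward_ge[of n "leg x"] by auto
    have "reachable (spider_states n) (spider_kernel n) (parent x) y"
    proof (cases "parent x = 0")
      case True thus ?thesis using reachable_spider_from_root[OF assms(2)] by simp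
    next
      case False
      hence "depth (parent x) < depth x" using spider_states_nonroot[OF less.prems nonroot] by (auto simp: parent_def)
      thus ?thesis using less.hyps p(1) by blast
    qed
    thus ?thesis using reachable_step[OF finite_spider_states stochastic_spider less.prems p(1,2)] by blast
  qed (use reachable_spider_from_root[OF assms(2)] in simp)
qed

lemma fin_irr_rev_spider: "fin_irr_rev_chain (spider_states n) (spider_kernel n) (spider_stat n)"
  using finite_spider_states[of n] root_in_spider_states[of n] stochastic_spider[of n] spider_stat_pos[of n]
    sum_spider_stat[of n] reversible_spider[of n] reachable_spider[of _ n]
  by (auto simp: fin_irr_rev_chain_def irreducible_chain_def reachable_def)

lemma spider_avoid_Suc:
  assumes "x \<in> spider_states n" "x \<noteq> 0"
  shows "spider_avoid n (Suc k) x = toward n (leg x) * spider_avoid n k (parent x) + away n * spider_avoid n k (child n x)"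
  using assms sum_spider_kernel_nonroot[OF assms] by (simp add: avoid_eq_0)

lemma sum_killed_spider_kernel:
  assumes "x \<in> spider_states n" "x \<noteq> 0"
  shows "(\<Sum>y\<in>spider_states n - {0}. spider_kernel n x y * F y)
       = toward n (leg x) * (if parent x = 0 then 0 else F (parent x)) + away n * F (child n x)"
proof -
  have "(\<Sum>y\<in>spider_states n - {0}. spider_kernel n x y * F y)
      = (\<Sum>y\<in>spider_states n. spider_kernel n x y * (if y = 0 then 0 else F y))"
    by (subst sum_vanishing_on[OF finite_spider_states, of "{0}"]) (auto intro: sum.cong)
  thus ?thesis using sum_spider_kernel_nonroot[OF assms] child_neq_root[OF assms] by simp
qed

section \<open>Relaxation time\<close>

definition geo_rate :: "nat \<Rightarrow> real" where "geo_rate n = 1/2 + 2 * away n"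

lemma geo_rate_bounds: "0 \<le> geo_rate n" "geo_rate n \<le> 1/2 + 2/4096"
  using away_pos[of n] away_le[of n] by (auto simp: geo_rate_def)

lemma lyapunov_killed_spider:
  "lyapunov_killed (spider_states n) (spider_kernel n) 0 (\<lambda>x. 2 ^ depth x) (geo_rate n)"
  unfolding lyapunov_killed_def
proof (intro ballI conjI)
  fix x assume "x \<in> spider_states n - {0}"
  hence x: "x \<in> spider_states n" "x \<noteq> 0" by auto
  obtain d where d: "depth x = Suc d" using spider_states_nonroot(2)[OF x] by (cases "depth x") auto
  have "toward n (leg x) * (if parent x = 0 then 0 else 2 ^ depth (parent x)) \<le> 1 * 2 ^ d"
    using toward_le[of n "leg x"] toward_ge[of n "leg x"] d by (intro mult_mono) (auto simp: parent_def)
  moreover have "depth (child n x) \<le> Suc (Suc d)" using d by (simp add: child_def)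
  hence "away n * 2 ^ depth (child n x) \<le> away n * 2 ^ Suc (Suc d)"
    using away_pos[of n] by (intro mult_left_mono power_increasing) auto
  ultimately show "(\<Sum>y\<in>spider_states n - {0}. spider_kernel n x y * 2 ^ depth y) \<le> geo_rate n * 2 ^ depth x"
    unfolding sum_killed_spider_kernel[OF x] by (simp add: d geo_rate_def algebra_simps)
qed simp

text \<open>The tips of the two legs of length 1 are exchangeable, so the difference of their
  indicators is an eigenfunction; it makes the maximum in the definition of \<open>\<lambda>\<^sub>2\<close> nonempty.\<close>
lemma spider_kernel_to_twin:
  assumes i: "i \<in> {2, 3}" and x: "x \<in> spider_states n" "x \<noteq> 0"
  shows "spider_kernel n x (node i 1) = (if x = node i 1 then away n else 0)"
proof -
  obtain i' j' where x': "x = node i' j'" "1 \<le> j'" "j' \<le> leg_len n i'"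
    using x by (auto elim!: spider_states_cases)
  have len: "leg_len n i = 1" using i by (auto simp: leg_len_def)
  have "node i 1 \<noteq> parent x" using x' len by (auto simp: parent_def node_eq_0_iff)
  moreover have "node i 1 = child n x \<longleftrightarrow> x = node i 1" using x' len by (auto simp: child_def)
  ultimately show ?thesis using x(2) by (simp add: spider_kernel_def leg_kernel_def)
qed

lemma spider_kernel_root_to_twin:
  assumes i: "i \<in> {2, 3}" shows "spider_kernel n 0 (node i 1) = away n"
proof -
  have "node i 1 \<noteq> 0" "parent (node i 1) = 0" "child n (node i 1) \<noteq> 0" "jump n i = 0"
    using i by (auto simp: node_eq_0_iff parent_def child_def leg_len_def jump_def)
  hence "spider_kernel n 0 (node i 1) = ratio n i * toward n i"
    by (simp add: spider_kernel_def leg_kernel_def weight_def)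
  thus ?thesis by (simp add: ratio_mult_toward)
qed

lemma twin_eigenvalue: "is_eigenvalue (spider_states n) (spider_kernel n) (away n)"
proof -
  define f where "f y = (if y = node 2 1 then 1 else 0) - (if y = node 3 1 then 1 else 0 :: real)" for y
  have twins: "node 2 1 \<in> spider_states n" "node 3 1 \<in> spider_states n" "node 2 1 \<noteq> node 3 1"
    using leg_len_ge[of n] by (auto simp: node_in_spider_states_iff)
  have Pf: "(\<Sum>y\<in>spider_states n. spider_kernel n x y * f y) = spider_kernel n x (node 2 1) - spider_kernel n x (node 3 1)" for x
  proof -
    have "(\<Sum>y\<in>spider_states n. spider_kernel n x y * f y) = (\<Sum>y\<in>spider_states n.
        (if y = node 2 1 then spider_kernel n x y else 0) - (if y = node 3 1 then spider_kernel n x y else 0))"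
      by (intro sum.cong) (auto simp: f_def)
    thus ?thesis using twins finite_spider_states[of n] by (simp add: sum_subtractf sum.delta')
  qed
  have "(\<Sum>y\<in>spider_states n. spider_kernel n x y * f y) = away n * f x" if "x \<in> spider_states n" for x
  proof (cases "x = 0")
    case True thus ?thesis unfolding Pf using spider_kernel_root_to_twin[of 2 n] spider_kernel_root_to_twin[of 3 n]
      by (simp add: f_def node_eq_0_iff)
  next
    case False thus ?thesis unfolding Pf using that twins(3) spider_kernel_to_twin[of 2 x n] spider_kernel_to_twin[of 3 x n]
      by (simp add: f_def)
  qed
  moreover have "f (node 2 1) \<noteq> 0" using twins by (simp add: f_def)
  ultimately show ?thesis unfolding is_eigenvalue_def using twins by blast
qed

lemma lambda2_spider_le: "lambda2 (spider_states n) (spider_kernel n) \<le> geo_rate n"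
  using spider_stat_pos geo_rate_bounds[of n] away_le[of n]
  by (intro lambda2_le_lyapunov_rate[OF finite_spider_states stochastic_spider _ reversible_spider
        root_in_spider_states lyapunov_killed_spider _ twin_eigenvalue]) auto

lemma trel_spider_le: "0 < trel (spider_states n) (spider_kernel n)" "trel (spider_states n) (spider_kernel n) \<le> 4"
proof -
  have "1/4 \<le> 1 - lambda2 (spider_states n) (spider_kernel n)"
    using lambda2_spider_le[of n] geo_rate_bounds[of n] by simp
  thus "0 < trel (spider_states n) (spider_kernel n)" "trel (spider_states n) (spider_kernel n) \<le> 4"
    by (simp_all add: trel_def divide_simps)
qed

section \<open>Hitting the root\<close>

lemma spider_avoid_le_geo:
  assumes "x \<in> spider_states n" shows "spider_avoid n k x \<le> geo_rate n ^ k * 2 ^ depth x"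
proof (cases "x = 0")
  case False thus ?thesis using assms geo_rate_bounds
    by (intro avoid_le_lyapunov[OF finite_spider_states stochastic_spider lyapunov_killed_spider]) auto
qed (simp add: avoid_eq_0 geo_rate_bounds)

lemma spider_avoid_leg1_le:
  assumes "x \<in> spider_states n" "x \<noteq> 0" "leg x = 1"
  shows "spider_avoid n k x \<le> (1 - jump n 1) ^ k"
  using assms
proof (induction k arbitrary: x)
  case (Suc k)
  have "0 \<le> 1 - jump n 1" using jump_le[of n 1] by simp
  hence "spider_avoid n k (parent x) \<le> (1 - jump n 1) ^ k"
    using Suc.IH[of "parent x"] Suc.prems parent_in_spider_states[OF Suc.prems(1,2)]
    by (cases "parent x = 0") (auto simp: avoid_eq_0 parent_def)
  moreover have "spider_avoid n k (child n x) \<le> (1 - jump n 1) ^ k"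
    using Suc.IH[of "child n x"] Suc.prems child_in_spider_states[OF Suc.prems(1,2)] child_neq_root[OF Suc.prems(1,2)]
    by (auto simp: child_def)
  ultimately have "spider_avoid n (Suc k) x \<le> (toward n 1 + away n) * (1 - jump n 1) ^ k"
    unfolding spider_avoid_Suc[OF Suc.prems(1,2)] using Suc.prems(3) toward_ge[of n 1] away_pos[of n]
    by (simp add: distrib_right add_mono mult_left_mono)
  thus ?case by (simp add: toward_def)
qed (use avoid_bounds[OF stochastic_spider] in simp)

lemma spider_avoid_eq_1:
  assumes "x \<in> spider_states n" "x \<noteq> 0" "leg x \<noteq> 1" "k < depth x"
  shows "spider_avoid n k x = 1"
  using assms
proof (induction k arbitrary: x)
  case (Suc k)
  have "spider_avoid n k (parent x) = 1" "spider_avoid n k (child n x) = 1"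
    using Suc.IH[of "parent x"] Suc.IH[of "child n x"] Suc.prems parent_in_spider_states[OF Suc.prems(1,2)]
      child_in_spider_states[OF Suc.prems(1,2)] child_neq_root[OF Suc.prems(1,2)]
    by (auto simp: parent_def child_def node_eq_0_iff)
  thus ?case unfolding spider_avoid_Suc[OF Suc.prems(1,2)] using Suc.prems(3) by (simp add: toward_def jump_def)
qed simp

lemma spider_avoid_leg1_ge:
  assumes "x \<in> spider_states n" "x \<noteq> 0" "leg x = 1" "k < depth x"
  shows "toward n 1 ^ k \<le> spider_avoid n k x"
  using assms
proof (induction k arbitrary: x)
  case (Suc k)
  have "toward n 1 ^ k \<le> spider_avoid n k (parent x)"
    using Suc.IH[of "parent x"] Suc.prems parent_in_spider_states[OF Suc.prems(1,2)]
    by (auto simp: parent_def node_eq_0_iff)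
  hence "toward n 1 * toward n 1 ^ k \<le> toward n 1 * spider_avoid n k (parent x)"
    using toward_ge[of n 1] by (intro mult_left_mono) auto
  moreover have "0 \<le> away n * spider_avoid n k (child n x)"
    using away_pos[of n] avoid_bounds(1)[OF stochastic_spider child_in_spider_states[OF Suc.prems(1,2)]] by simp
  ultimately show ?case unfolding spider_avoid_Suc[OF Suc.prems(1,2)] using Suc.prems(3) by simp
qed simp

text \<open>Bounds the expected time to reach the root: off leg 1 the walk moves towards the root at
  speed \<open>1 - 2 away\<close>, on leg 1 it jumps there after \<open>8N\<close> steps on average.\<close>
definition root_hit_bound :: "nat \<Rightarrow> nat \<Rightarrow> real" where
  "root_hit_bound n x = (if leg x = 1 then 8 * real (spider_size n) else real (depth x) / (1 - 2 * away n))"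

lemma root_hit_bound_nonneg: "0 \<le> root_hit_bound n x"
  using away_le[of n] by (simp add: root_hit_bound_def)

lemma root_hit_bound_drift:
  assumes x: "x \<in> spider_states n - {0}"
  shows "1 + (\<Sum>y\<in>spider_states n - {0}. spider_kernel n x y * root_hit_bound n y) \<le> root_hit_bound n x"
proof -
  have xS: "x \<in> spider_states n" "x \<noteq> 0" using x by auto
  define N where "N = real (spider_size n)"
  define a where "a = away n"
  have N: "16 \<le> N" and a: "0 < a" "a \<le> 1/4096" using spider_size_ge[of n] away_pos[of n] away_le[of n]
    by (auto simp: N_def a_def)
  let ?p = "if parent x = 0 then 0 else root_hit_bound n (parent x)"
  have eq: "(\<Sum>y\<in>spider_states n - {0}. spider_kernel n x y * root_hit_bound n y)
      = toward n (leg x) * ?p + a * root_hit_bound n (child n x)"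
    unfolding a_def by (rule sum_killed_spider_kernel[OF xS])
  show ?thesis
  proof (cases "leg x = 1")
    case True
    have "?p \<le> 8 * N" "root_hit_bound n (child n x) \<le> 8 * N" using True
      by (auto simp: root_hit_bound_def parent_def child_def N_def)
    hence "toward n (leg x) * ?p + a * root_hit_bound n (child n x) \<le> toward n 1 * (8 * N) + a * (8 * N)"
      using True toward_ge[of n 1] a by (intro add_mono mult_left_mono) auto
    also have "\<dots> = 8 * N - 1" using N by (simp add: toward_def jump_def N_def a_def algebra_simps)
    also have "8 * N = root_hit_bound n x" using True by (simp add: root_hit_bound_def N_def)
    finally show ?thesis unfolding eq by simp
  next
    case False
    define j where "j = real (depth x)"
    have j: "1 \<le> j" using spider_states_nonroot[OF xS] by (simp add: j_def)
    have p: "?p \<le> (j - 1) / (1 - 2 * a)" and c: "root_hit_bound n (child n x) \<le> (j + 1) / (1 - 2 * a)"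
      using False j a by (auto simp: root_hit_bound_def parent_def child_def j_def a_def of_nat_diff divide_right_mono)
    have "toward n (leg x) = 1 - a" using False by (simp add: toward_def jump_def a_def)
    hence "toward n (leg x) * ?p \<le> (1 - a) * ((j - 1) / (1 - 2 * a))"
      using mult_left_mono[OF p, of "1 - a"] a by simp
    moreover have "a * root_hit_bound n (child n x) \<le> a * ((j + 1) / (1 - 2 * a))"
      using mult_left_mono[OF c, of a] a by simp
    ultimately have "toward n (leg x) * ?p + a * root_hit_bound n (child n x)
        \<le> (1 - a) * ((j - 1) / (1 - 2 * a)) + a * ((j + 1) / (1 - 2 * a))" by (rule add_mono)
    also have "\<dots> = j / (1 - 2 * a) - 1"
      using a by (simp add: divide_simps) (simp add: algebra_simps)
    also have "j / (1 - 2 * a) = root_hit_bound n x" using False by (simp add: root_hit_bound_def j_def a_def)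
    finally show ?thesis unfolding eq by simp
  qed
qed

lemma sum_spider_avoid_le_root_hit_bound:
  assumes "x \<in> spider_states n" shows "(\<Sum>k<m. spider_avoid n k x) \<le> root_hit_bound n x"
proof (cases "x = 0")
  case False thus ?thesis using assms root_hit_bound_nonneg root_hit_bound_drift
    by (intro sum_avoid_le_lyapunov[OF finite_spider_states stochastic_spider]) auto
qed (simp add: avoid_eq_0 root_hit_bound_nonneg)

abbreviation spider_hit_exp :: "nat \<Rightarrow> nat \<Rightarrow> real" where
  "spider_hit_exp n x \<equiv> hit_exp (spider_kernel n) (spider_states n) {0} x"

definition tip :: "nat \<Rightarrow> nat \<Rightarrow> nat" where "tip n i = node i (leg_len n i)"

lemma tip_in_spider_states: "i < 4 \<Longrightarrow> tip n i \<in> spider_states n"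
  using leg_len_ge[of n i] by (simp add: tip_def node_in_spider_states_iff)

lemma tip_neq_root: "i < 4 \<Longrightarrow> tip n i \<noteq> 0"
  using leg_len_ge[of n i] by (auto simp: tip_def node_eq_0_iff)

lemma leg_tip: "leg (tip n i) = i" and depth_tip: "depth (tip n i) = leg_len n i"
  by (simp_all add: tip_def)

lemma summable_spider_avoid:
  assumes "x \<in> spider_states n"
  shows "summable (\<lambda>k. spider_avoid n k x)" "(\<Sum>k. spider_avoid n k x) \<le> root_hit_bound n x"
proof -
  show s: "summable (\<lambda>k. spider_avoid n k x)"
    using avoid_bounds(1)[OF stochastic_spider assms] sum_spider_avoid_le_root_hit_bound[OF assms]
    by (intro summableI_nonneg_bounded) auto
  show "(\<Sum>k. spider_avoid n k x) \<le> root_hit_bound n x"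
    using sum_spider_avoid_le_root_hit_bound[OF assms] by (intro suminf_le_const[OF s])
qed

lemma spider_hit_exp_eq:
  assumes "x \<in> spider_states n" shows "spider_hit_exp n x = (\<Sum>k. spider_avoid n k x)"
  using hit_exp_eq_suminf[OF stochastic_spider assms summable_spider_avoid(1)[OF assms]] .

lemma spider_hit_exp_le: "x \<in> spider_states n \<Longrightarrow> spider_hit_exp n x \<le> root_hit_bound n x"
  using spider_hit_exp_eq summable_spider_avoid(2) by simp

lemma spider_hit_exp_tip_ge: "real (10 * spider_size n) \<le> spider_hit_exp n (tip n 0)"
proof -
  have "real (10 * spider_size n) = (\<Sum>k<10 * spider_size n. spider_avoid n k (tip n 0))"
    using spider_avoid_eq_1[OF tip_in_spider_states tip_neq_root] leg_tip depth_tip by (simp add: leg_len_def)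
  also have "\<dots> \<le> (\<Sum>k. spider_avoid n k (tip n 0))"
    using summable_spider_avoid(1)[OF tip_in_spider_states] avoid_bounds(1)[OF stochastic_spider tip_in_spider_states]
    by (intro sum_le_suminf) auto
  finally show ?thesis using spider_hit_exp_eq[OF tip_in_spider_states] by simp
qed

lemma spider_hit_exp_tip_le: "spider_hit_exp n (tip n 0) \<le> real (10 * spider_size n) / (1 - 2 * away n)"
  using spider_hit_exp_le[OF tip_in_spider_states[of 0 n]] leg_tip depth_tip by (simp add: root_hit_bound_def leg_len_def)

lemma spider_hit_exp_lt:
  assumes x: "x \<in> spider_states n" "x \<noteq> tip n 0"
  shows "spider_hit_exp n x < real (10 * spider_size n)"
proof (cases "x = 0")
  case True thus ?thesis using spider_size_ge[of n] spider_hit_exp_eq[OF x(1)] by (simp add: avoid_eq_0)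
next
  case False
  define N where "N = real (spider_size n)"
  have N: "16 \<le> N" using spider_size_ge[of n] by (simp add: N_def)
  have "root_hit_bound n x < 10 * N"
  proof (cases "leg x = 1")
    case other_leg: False
    have "leg x \<noteq> 0 \<or> depth x \<noteq> 10 * spider_size n"
      using x(2) node_leg_depth[of x] by (auto simp: tip_def leg_len_def)
    hence "depth x \<le> 10 * spider_size n - 1"
      using spider_states_nonroot[OF x(1) False] other_leg spider_size_ge[of n]
      by (auto simp: leg_len_def split: if_splits)
    hence "real (depth x) \<le> 10 * N - 1" using spider_size_ge[of n] by (simp add: N_def of_nat_diff)
    also have "\<dots> < 10 * N * (1 - 2 * away n)" using spider_size_mult_away_le[of n] by (simp add: N_def algebra_simps)
    finally show ?thesis using other_leg away_le[of n] by (simp add: root_hit_bound_def N_def divide_simps)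
  qed (use N in \<open>simp add: root_hit_bound_def N_def\<close>)
  thus ?thesis using spider_hit_exp_le[OF x(1)] by (simp add: N_def)
qed

lemma spider_stat_root_ge: "1/2 \<le> spider_stat n 0"
  using spider_stat_root[of n] away_le[of n] by simp

lemma root_in_half_mass:
  assumes A: "A \<subseteq> spider_states n" and m: "1/2 \<le> (\<Sum>y\<in>A. spider_stat n y)" shows "0 \<in> A"
proof (rule ccontr)
  assume "0 \<notin> A"
  hence "(\<Sum>y\<in>A. spider_stat n y) \<le> (\<Sum>y\<in>spider_states n - {0}. spider_stat n y)"
    using A finite_spider_states[of n] spider_stat_pos[of n] by (intro sum_mono2) (auto intro: less_imp_le)
  also have "\<dots> = 1 - spider_stat n 0"
    using sum_spider_stat[of n] sum_diff1[OF finite_spider_states[of n], of "spider_stat n" 0] root_in_spider_states[of n]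
    by simp
  also have "\<dots> < 1/2" using spider_stat_root[of n] away_le[of n] by simp
  finally show False using m by simp
qed

lemma tH_spider: "spider_hit_exp n (tip n 0) = tH (spider_states n) (spider_kernel n) (spider_stat n) (1/2)"
proof -
  define Y where "Y = {hit_exp (spider_kernel n) (spider_states n) A x | x A.
    x \<in> spider_states n \<and> A \<subseteq> spider_states n \<and> (\<Sum>y\<in>A. spider_stat n y) \<ge> 1/2}"
  have "Y \<subseteq> (\<lambda>(x, A). hit_exp (spider_kernel n) (spider_states n) A x) ` (spider_states n \<times> Pow (spider_states n))"
    by (auto simp: Y_def)
  hence "finite Y" using finite_spider_states[of n] by (auto intro: finite_subset)
  moreover have "spider_hit_exp n (tip n 0) \<in> Y"
    using tip_in_spider_states root_in_spider_states[of n] spider_stat_root_ge[of n] unfolding Y_def by fastforce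
  moreover have "y \<le> spider_hit_exp n (tip n 0)" if "y \<in> Y" for y
  proof -
    obtain x A where y: "y = hit_exp (spider_kernel n) (spider_states n) A x" and x: "x \<in> spider_states n"
      and A: "A \<subseteq> spider_states n" "1/2 \<le> (\<Sum>y\<in>A. spider_stat n y)" using \<open>y \<in> Y\<close> unfolding Y_def by blast
    have "y \<le> spider_hit_exp n x"
      using hit_exp_antimono[OF stochastic_spider x _ summable_spider_avoid(1)[OF x]] root_in_half_mass[OF A] y
      by simp
    also have "\<dots> \<le> spider_hit_exp n (tip n 0)"
      using spider_hit_exp_lt[OF x] spider_hit_exp_tip_ge[of n] by (cases "x = tip n 0") auto
    finally show ?thesis .
  qed
  ultimately show ?thesis unfolding tH_def Y_def[symmetric] by (intro Max_eqI[symmetric]) auto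
qed

section \<open>Mixing times\<close>

abbreviation spider_hit_gt :: "nat \<Rightarrow> nat \<Rightarrow> real \<Rightarrow> real" where
  "spider_hit_gt n x t \<equiv> hit_gt (spider_kernel n) (spider_states n) {0} x t"

abbreviation spider_dist :: "nat \<Rightarrow> real \<Rightarrow> real" where
  "spider_dist n t \<equiv> dist_stat (spider_states n) (spider_kernel n) (spider_stat n) t"

abbreviation spider_tmix :: "nat \<Rightarrow> real \<Rightarrow> real" where
  "spider_tmix n eps \<equiv> tmix (spider_states n) (spider_kernel n) (spider_stat n) eps"

text \<open>Leg 1 is left at rate \<open>1/(8N)\<close>; elsewhere \<open>2 ^ depth\<close> is contracted by \<open>geo_rate\<close>.\<close>
definition spider_avoid_bound :: "nat \<Rightarrow> nat \<Rightarrow> real" where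
  "spider_avoid_bound n m = (1 - jump n 1) ^ m + geo_rate n ^ m * 2 ^ (10 * spider_size n)"

lemma spider_avoid_bound_nonneg: "0 \<le> spider_avoid_bound n m"
  using jump_le[of n 1] geo_rate_bounds[of n] by (simp add: spider_avoid_bound_def)

lemma spider_avoid_bound_antimono: "m \<le> k \<Longrightarrow> spider_avoid_bound n k \<le> spider_avoid_bound n m"
  using jump_le[of n 1] jump_nonneg[of n 1] geo_rate_bounds[of n]
  unfolding spider_avoid_bound_def by (intro add_mono mult_right_mono power_decreasing) auto

lemma spider_avoid_le_bound:
  assumes x: "x \<in> spider_states n" shows "spider_avoid n k x \<le> spider_avoid_bound n k"
proof (cases "x = 0 \<or> leg x = 1")
  case True
  have "spider_avoid n k x \<le> (1 - jump n 1) ^ k"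
    using True spider_avoid_leg1_le[OF x] jump_le[of n 1] by (cases "x = 0") (auto simp: avoid_eq_0)
  moreover have "0 \<le> geo_rate n ^ k * 2 ^ (10 * spider_size n)" using geo_rate_bounds[of n] by simp
  ultimately show ?thesis by (simp add: spider_avoid_bound_def)
next
  case False
  have "depth x \<le> 10 * spider_size n"
    using spider_states_nonroot[OF x] False spider_size_ge[of n] by (auto simp: leg_len_def split: if_splits)
  hence "geo_rate n ^ k * 2 ^ depth x \<le> geo_rate n ^ k * 2 ^ (10 * spider_size n)"
    using geo_rate_bounds[of n] by (intro mult_left_mono power_increasing) auto
  moreover have "0 \<le> (1 - jump n 1) ^ k" using jump_le[of n 1] by simp
  ultimately show ?thesis using spider_avoid_le_geo[OF x, of k] by (simp add: spider_avoid_bound_def)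
qed

lemma spider_hit_gt_le:
  assumes "x \<in> spider_states n" "u * real m \<le> t" "1 \<le> u"
  shows "spider_hit_gt n x t \<le> spider_avoid_bound n m + (u * exp (1 - u)) ^ m"
proof (rule hit_gt_upper[OF stochastic_spider assms])
  fix k assume "m \<le> k"
  thus "spider_avoid n k x \<le> spider_avoid_bound n m"
    using spider_avoid_le_bound[OF assms(1), of k] spider_avoid_bound_antimono[of m k n] by linarith
qed (rule spider_avoid_bound_nonneg)

lemma spider_hit_gt_tip0_ge:
  assumes "0 \<le> t" "t \<le> u * real (10 * spider_size n)" "0 < u" "u \<le> 1"
  shows "1 - (u * exp (1 - u)) ^ (10 * spider_size n) \<le> spider_hit_gt n (tip n 0) t"
  using hit_gt_lower[OF stochastic_spider tip_in_spider_states[of 0 n] assms, of 1]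
    spider_avoid_eq_1[OF tip_in_spider_states[of 0 n] tip_neq_root[of 0 n]] leg_tip depth_tip
  by (simp add: leg_len_def)

lemma spider_hit_gt_tip1_ge:
  assumes "0 \<le> t" "t \<le> u * real (16 * spider_size n)" "0 < u" "u \<le> 1"
  shows "toward n 1 ^ (16 * spider_size n) * (1 - (u * exp (1 - u)) ^ (16 * spider_size n))
    \<le> spider_hit_gt n (tip n 1) t"
proof (rule hit_gt_lower[OF stochastic_spider tip_in_spider_states assms])
  fix k assume k: "k < 16 * spider_size n"
  have "toward n 1 ^ (16 * spider_size n) \<le> toward n 1 ^ k"
    using k toward_ge[of n 1] toward_le[of n 1] by (intro power_decreasing) auto
  also have "\<dots> \<le> spider_avoid n k (tip n 1)"
    using spider_avoid_leg1_ge[OF tip_in_spider_states tip_neq_root] leg_tip depth_tip k by (simp add: leg_len_def)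
  finally show "toward n 1 ^ (16 * spider_size n) \<le> spider_avoid n k (tip n 1)" .
qed (use toward_ge[of n 1] in auto)

lemma spider_dist_le:
  assumes t: "0 \<le> t" and b: "\<And>x. x \<in> spider_states n \<Longrightarrow> spider_hit_gt n x t \<le> b"
  shows "spider_dist n t \<le> 16 * away n + b + t * (16 * away n)"
proof -
  have "spider_dist n t \<le> (1 - spider_stat n 0) + b + t * (1 - spider_kernel n 0 0)"
    using spider_stat_pos[of n] sum_spider_stat[of n] b
    by (intro dist_stat_le_hit_gt[OF finite_spider_states stochastic_spider root_in_spider_states t])
      (auto intro: less_imp_le)
  also have "\<dots> \<le> 16 * away n + b + t * (16 * away n)"
    using spider_stat_root[of n] spider_kernel_root_root[of n] t by (intro add_mono mult_left_mono) auto
  finally show ?thesis .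
qed

lemma spider_dist_ge:
  "x \<in> spider_states n \<Longrightarrow> 0 \<le> t \<Longrightarrow> spider_hit_gt n x t - 16 * away n \<le> spider_dist n t"
  using dist_stat_ge_hit_gt[OF finite_spider_states stochastic_spider root_in_spider_states, of x n t "spider_stat n"]
    spider_stat_root[of n] by linarith

lemma toward_pow_ge: "1/21 \<le> toward n 1 ^ (16 * spider_size n)"
proof -
  define N where "N = real (spider_size n)"
  have N: "16 \<le> N" using spider_size_ge[of n] by (simp add: N_def)
  have "95/128 \<le> 1 + real (2 * spider_size n) * (toward n 1 - 1)"
    using spider_size_mult_away_le[of n] N by (simp add: toward_def jump_def N_def algebra_simps)
  also have "\<dots> \<le> toward n 1 ^ (2 * spider_size n)"
    using Bernoulli_inequality[of "toward n 1 - 1" "2 * spider_size n"] toward_ge[of n 1] by simp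
  finally have "(95/128) ^ 8 \<le> (toward n 1 ^ (2 * spider_size n)) ^ 8" by (intro power_mono) auto
  moreover have "(1/21::real) \<le> (95/128) ^ 8" by (simp add: power_divide)
  ultimately show ?thesis by (simp add: power_mult[symmetric] mult.commute)
qed

lemma geo_rate_pow_le:
  assumes "10 * spider_size n \<le> m"
  shows "geo_rate n ^ m * 2 ^ (10 * spider_size n) \<le> exp (4 * away n * real m) * (1/2) ^ (m - 10 * spider_size n)"
proof -
  have "geo_rate n ^ m * 2 ^ (10 * spider_size n) = (1 + 4 * away n) ^ m * ((1/2) ^ m * 2 ^ (10 * spider_size n))"
    by (simp add: geo_rate_def power_mult_distrib[symmetric] algebra_simps)
  also have "(1/2::real) ^ m * 2 ^ (10 * spider_size n) = (1/2) ^ (m - 10 * spider_size n)"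
    using assms by (simp add: power_diff power_one_over)
  also have "(1 + 4 * away n) ^ m \<le> exp (4 * away n) ^ m"
    using away_pos[of n] by (intro power_mono) auto
  hence "(1 + 4 * away n) ^ m * (1/2) ^ (m - 10 * spider_size n) \<le> exp (4 * away n * real m) * (1/2) ^ (m - 10 * spider_size n)"
    by (simp add: exp_of_nat_mult[symmetric] mult.commute mult_left_mono)
  finally show ?thesis .
qed

lemma spider_avoid_bound_le:
  assumes "10 * spider_size n \<le> m"
  shows "spider_avoid_bound n m
    \<le> exp (- real m / (8 * real (spider_size n))) + exp (4 * away n * real m) * (1/2) ^ (m - 10 * spider_size n)"
proof -
  have "(1 - jump n 1) ^ m \<le> exp (- jump n 1) ^ m"
    using jump_le[of n 1] exp_ge_add_one_self[of "- jump n 1"] by (intro power_mono) auto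
  thus ?thesis using geo_rate_pow_le[OF assms]
    by (simp add: spider_avoid_bound_def exp_of_nat_mult[symmetric] jump_def)
qed

lemma filterlim_mult_spider_size:
  assumes "0 < c" shows "filterlim (\<lambda>n. c * spider_size n) sequentially sequentially"
proof (rule filterlim_at_top_mono[OF filterlim_ident always_eventually], intro allI)
  fix n
  have "n \<le> 1 * spider_size n" by (simp add: spider_size_def)
  also have "\<dots> \<le> c * spider_size n" using assms by (intro mult_le_mono1) simp
  finally show "n \<le> c * spider_size n" .
qed

lemma eventually_spider_size_ge: "eventually (\<lambda>n. K \<le> real (spider_size n)) sequentially"
  by (rule eventually_sequentiallyI[of "nat \<lceil>K\<rceil>"]) (auto simp: spider_size_def)

lemma eventually_spider_size_mult_away_le:
  assumes "0 < e" shows "eventually (\<lambda>n. real (spider_size n) * away n \<le> e) sequentially"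
  using eventually_spider_size_ge[of "1 / e"]
proof (rule eventually_mono)
  fix n assume n: "1 / e \<le> real (spider_size n)"
  have N: "16 \<le> real (spider_size n)" using spider_size_ge[of n] by simp
  have "1 / real (spider_size n) ^ 2 \<le> 1 / real (spider_size n)" using N by (simp add: divide_simps power2_eq_square)
  also have "\<dots> \<le> e" using n assms N by (simp add: divide_simps mult.commute)
  finally show "real (spider_size n) * away n \<le> e" by (simp add: spider_size_mult_away)
qed

lemma away_le_spider_size_mult_away: "away n \<le> real (spider_size n) * away n"
  using spider_size_ge[of n] away_pos[of n] by simp

lemma spider_dist_le_chernoff:
  assumes m: "10 * spider_size n \<le> m" and u: "1 \<le> u"
  shows "spider_dist n (u * real m) \<le> 16 * away n + exp (- real m / (8 * real (spider_size n)))
    + exp (4 * away n * real m) * (1/2) ^ (m - 10 * spider_size n) + (u * exp (1 - u)) ^ m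
    + u * real m * (16 * away n)"
proof -
  have "spider_dist n (u * real m) \<le> 16 * away n + (spider_avoid_bound n m + (u * exp (1 - u)) ^ m)
      + u * real m * (16 * away n)"
    using u spider_hit_gt_le[of _ n u m "u * real m"] by (intro spider_dist_le) auto
  thus ?thesis using spider_avoid_bound_le[OF m] by linarith
qed

lemma eventually_spider_dist_early:
  "eventually (\<lambda>n. \<forall>t. 0 \<le> t \<and> t \<le> 8 * real (spider_size n) \<longrightarrow> 39/40 < spider_dist n t) sequentially"
proof -
  define b where "b = (4/5::real) * exp (1 - 4/5)"
  have b: "0 \<le> b" "b < 1" using chernoff_base_bounds[of "4/5"] by (auto simp: b_def)
  have "eventually (\<lambda>n. b ^ (10 * spider_size n) \<le> 1/100) sequentially"
    by (rule eventually_power_le[OF b]) (auto intro: filterlim_mult_spider_size)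
  moreover have "eventually (\<lambda>n. real (spider_size n) * away n \<le> 1/10000) sequentially"
    by (rule eventually_spider_size_mult_away_le) simp
  ultimately show ?thesis
  proof eventually_elim
    case (elim n)
    show ?case
    proof (intro allI impI)
      fix t assume t: "0 \<le> t \<and> t \<le> 8 * real (spider_size n)"
      have "1 - b ^ (10 * spider_size n) \<le> spider_hit_gt n (tip n 0) t"
        unfolding b_def using t by (intro spider_hit_gt_tip0_ge) auto
      thus "39/40 < spider_dist n t"
        using spider_dist_ge[OF tip_in_spider_states[of 0 n], of t] t elim away_le_spider_size_mult_away[of n] by linarith
    qed
  qed
qed

lemma eventually_spider_dist_12N: "eventually (\<lambda>n. spider_dist n (12 * real (spider_size n)) \<le> 39/40) sequentially"
proof -
  define b where "b = (12/11::real) * exp (1 - 12/11)"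
  have b: "0 \<le> b" "b < 1" using chernoff_base_bounds[of "12/11"] by (auto simp: b_def)
  have "eventually (\<lambda>n. b ^ (11 * spider_size n) \<le> 1/100) sequentially"
    by (rule eventually_power_le[OF b]) (auto intro: filterlim_mult_spider_size)
  moreover have "eventually (\<lambda>n. (1/2::real) ^ spider_size n \<le> 1/300) sequentially"
    using filterlim_mult_spider_size[of 1] by (intro eventually_power_le) auto
  moreover have "eventually (\<lambda>n. real (spider_size n) * away n \<le> 1/20000) sequentially"
    by (rule eventually_spider_size_mult_away_le) simp
  ultimately show ?thesis
  proof eventually_elim
    case (elim n)
    define N where "N = real (spider_size n)"
    have N: "16 \<le> N" using spider_size_ge[of n] by (simp add: N_def)
    have "exp (- real (11 * spider_size n) / (8 * N)) \<le> exp (-1)" using N by (simp add: N_def divide_simps)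
    also have "exp (-1::real) \<le> 1/2"
      using exp_ge_add_one_self[of "1::real"] by (simp add: exp_minus divide_simps)
    finally have e1: "exp (- real (11 * spider_size n) / (8 * N)) \<le> 1/2" .
    have e2: "exp (4 * away n * real (11 * spider_size n)) \<le> 3"
      using elim(3) by (intro exp_le_3) (simp add: algebra_simps)
    have t: "12 * real (spider_size n) = 12/11 * real (11 * spider_size n)" by simp
    have "spider_dist n (12 * real (spider_size n)) \<le> 16 * away n + exp (- real (11 * spider_size n) / (8 * N))
        + exp (4 * away n * real (11 * spider_size n)) * (1/2) ^ (11 * spider_size n - 10 * spider_size n)
        + b ^ (11 * spider_size n) + 12/11 * real (11 * spider_size n) * (16 * away n)"
      unfolding t b_def N_def by (rule spider_dist_le_chernoff) auto
    moreover have "exp (4 * away n * real (11 * spider_size n)) * (1/2) ^ (11 * spider_size n - 10 * spider_size n) \<le> 3 * (1/300)"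
      using e2 elim(2) by (intro mult_mono) auto
    moreover have "12/11 * real (11 * spider_size n) * (16 * away n) = 192 * (real (spider_size n) * away n)"
      by simp
    ultimately show ?case using e1 elim away_le_spider_size_mult_away[of n] by linarith
  qed
qed

lemma eventually_spider_dist_440N: "eventually (\<lambda>n. spider_dist n (440 * real (spider_size n)) \<le> 1/40) sequentially"
proof -
  define b where "b = (11/10::real) * exp (1 - 11/10)"
  have b: "0 \<le> b" "b < 1" using chernoff_base_bounds[of "11/10"] by (auto simp: b_def)
  have "eventually (\<lambda>n. b ^ (400 * spider_size n) \<le> 1/1000) sequentially"
    by (rule eventually_power_le[OF b]) (auto intro: filterlim_mult_spider_size)
  moreover have "eventually (\<lambda>n. (1/2::real) ^ (390 * spider_size n) \<le> 1/3000) sequentially"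
    by (rule eventually_power_le) (auto intro: filterlim_mult_spider_size)
  moreover have "eventually (\<lambda>n. real (spider_size n) * away n \<le> 1/10000000) sequentially"
    by (rule eventually_spider_size_mult_away_le) simp
  ultimately show ?thesis
  proof eventually_elim
    case (elim n)
    define N where "N = real (spider_size n)"
    have N: "16 \<le> N" using spider_size_ge[of n] by (simp add: N_def)
    have "- real (400 * spider_size n) / (8 * N) = -50" using N by (simp add: N_def divide_simps)
    moreover have "exp (-50::real) \<le> 1/51"
      using exp_ge_add_one_self[of "50::real"] by (simp add: exp_minus divide_simps)
    ultimately have e1: "exp (- real (400 * spider_size n) / (8 * N)) \<le> 1/51" by simp
    have "exp (4 * away n * real (400 * spider_size n)) \<le> 3"
      using elim(3) by (intro exp_le_3) (simp add: algebra_simps)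
    hence e2: "exp (4 * away n * real (400 * spider_size n)) * (1/2) ^ (400 * spider_size n - 10 * spider_size n) \<le> 3 * (1/3000)"
      using elim(2) by (intro mult_mono) auto
    have t: "440 * real (spider_size n) = 11/10 * real (400 * spider_size n)" by simp
    have "spider_dist n (440 * real (spider_size n)) \<le> 16 * away n + exp (- real (400 * spider_size n) / (8 * N))
        + exp (4 * away n * real (400 * spider_size n)) * (1/2) ^ (400 * spider_size n - 10 * spider_size n)
        + b ^ (400 * spider_size n) + 11/10 * real (400 * spider_size n) * (16 * away n)"
      unfolding t b_def N_def by (rule spider_dist_le_chernoff) auto
    moreover have "11/10 * real (400 * spider_size n) * (16 * away n) = 7040 * (real (spider_size n) * away n)"
      by simp
    ultimately show ?case using e1 e2 elim away_le_spider_size_mult_away[of n] by linarith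
  qed
qed

lemma eventually_spider_dist_14N:
  "eventually (\<lambda>n. \<forall>t. 0 \<le> t \<and> t < 14 * real (spider_size n) \<longrightarrow> 1/40 < spider_dist n t) sequentially"
proof -
  define b where "b = (7/8::real) * exp (1 - 7/8)"
  have b: "0 \<le> b" "b < 1" using chernoff_base_bounds[of "7/8"] by (auto simp: b_def)
  have "eventually (\<lambda>n. b ^ (16 * spider_size n) \<le> 1/10) sequentially"
    by (rule eventually_power_le[OF b]) (auto intro: filterlim_mult_spider_size)
  moreover have "eventually (\<lambda>n. real (spider_size n) * away n \<le> 1/10000) sequentially"
    by (rule eventually_spider_size_mult_away_le) simp
  ultimately show ?thesis
  proof eventually_elim
    case (elim n)
    show ?case
    proof (intro allI impI)
      fix t assume t: "0 \<le> t \<and> t < 14 * real (spider_size n)"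
      have "toward n 1 ^ (16 * spider_size n) * (1 - b ^ (16 * spider_size n)) \<le> spider_hit_gt n (tip n 1) t"
        unfolding b_def using t by (intro spider_hit_gt_tip1_ge) auto
      moreover have "1/21 * (1 - b ^ (16 * spider_size n)) \<le> toward n 1 ^ (16 * spider_size n) * (1 - b ^ (16 * spider_size n))"
        using toward_pow_ge[of n] elim(1) b by (intro mult_right_mono) auto
      moreover have "spider_hit_gt n (tip n 1) t - 16 * away n \<le> spider_dist n t"
        using t by (intro spider_dist_ge tip_in_spider_states) auto
      moreover have "3/70 \<le> 1/21 * (1 - b ^ (16 * spider_size n))" using elim(1) by simp
      ultimately show "1/40 < spider_dist n t" using elim(2) away_le_spider_size_mult_away[of n] by linarith
    qed
  qed
qed

lemma eventually_spider_tmix_bounds: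
  "eventually (\<lambda>n. 8 * real (spider_size n) \<le> spider_tmix n (1/4)
     \<and> 8 * real (spider_size n) \<le> spider_tmix n (39/40) \<and> spider_tmix n (39/40) \<le> 12 * real (spider_size n)
     \<and> 14 * real (spider_size n) \<le> spider_tmix n (1/40)) sequentially"
  using eventually_spider_dist_early eventually_spider_dist_12N eventually_spider_dist_440N eventually_spider_dist_14N
proof eventually_elim
  case (elim n)
  have t: "0 \<le> 440 * real (spider_size n)" by simp
  show ?case
  proof (intro conjI)
    show "8 * real (spider_size n) \<le> spider_tmix n (1/4)"
      by (rule tmix_ge[OF t]) (use elim in \<open>auto intro: order.strict_trans2[of _ "39/40"]\<close>)
    show "8 * real (spider_size n) \<le> spider_tmix n (39/40)" by (rule tmix_ge[OF t]) (use elim in auto)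
    show "spider_tmix n (39/40) \<le> 12 * real (spider_size n)" by (rule tmix_le) (use elim in auto)
    show "14 * real (spider_size n) \<le> spider_tmix n (1/40)" by (rule tmix_ge[OF t]) (use elim in auto)
  qed
qed

lemma trel_spider_small_tmix:
  "(\<lambda>n. trel (spider_states n) (spider_kernel n)) \<in> o(\<lambda>n. spider_tmix n (1/4))"
proof (rule landau_o.smallI)
  fix c :: real assume c: "0 < c"
  show "eventually (\<lambda>n. norm (trel (spider_states n) (spider_kernel n)) \<le> c * norm (spider_tmix n (1/4))) at_top"
    using eventually_spider_tmix_bounds eventually_spider_size_ge[of "1 / (2 * c)"]
  proof eventually_elim
    case (elim n)
    have "trel (spider_states n) (spider_kernel n) \<le> c * (8 * real (spider_size n))"
      using trel_spider_le(2)[of n] elim(2) c by (simp add: divide_simps mult_ac)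
    also have "\<dots> \<le> c * norm (spider_tmix n (1/4))" using elim(1) c by (intro mult_left_mono) auto
    finally show ?case using trel_spider_le(1)[of n] by simp
  qed
qed

lemma spider_no_cutoff: "\<not> has_cutoff spider_states spider_kernel spider_stat"
proof
  assume "has_cutoff spider_states spider_kernel spider_stat"
  hence "(\<lambda>n. spider_tmix n (1/40) / spider_tmix n (39/40)) \<longlonglongrightarrow> 1"
    unfolding has_cutoff_def by (rule allE[where x = "1/40"]) simp
  hence "eventually (\<lambda>n. spider_tmix n (1/40) / spider_tmix n (39/40) < 7/6) sequentially"
    by (rule order_tendstoD(2)) simp
  moreover have "eventually (\<lambda>n. 7/6 \<le> spider_tmix n (1/40) / spider_tmix n (39/40)) sequentially"
    using eventually_spider_tmix_bounds
  proof eventually_elim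
    case (elim n)
    define N where "N = real (spider_size n)"
    have N: "16 \<le> N" using spider_size_ge[of n] by (simp add: N_def)
    have "7/6 = (14 * N) / (12 * N)" using N by simp
    also have "\<dots> \<le> spider_tmix n (1/40) / (12 * N)" using elim N by (intro divide_right_mono) (auto simp: N_def)
    also have "\<dots> \<le> spider_tmix n (1/40) / spider_tmix n (39/40)"
      using elim N by (intro divide_left_mono) (auto simp: N_def intro: mult_pos_pos)
    finally show ?case .
  qed
  ultimately have "eventually (\<lambda>n. False) sequentially" by eventually_elim simp
  thus False by simp
qed

section \<open>Concentration of the hitting time\<close>

abbreviation spider_hit_lt :: "nat \<Rightarrow> nat \<Rightarrow> real \<Rightarrow> real" where
  "spider_hit_lt n x t \<equiv> hit_lt (spider_kernel n) (spider_states n) {0} x t"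

lemma spider_hit_lt_tip_le:
  assumes eps: "0 < eps" "eps < 1" and a: "away n \<le> eps / 4"
  shows "spider_hit_lt n (tip n 0) ((1 - eps) * spider_hit_exp n (tip n 0))
    \<le> ((1 - eps/2) * exp (1 - (1 - eps/2))) ^ (10 * spider_size n)"
proof -
  define E where "E = spider_hit_exp n (tip n 0)"
  define N where "N = real (10 * spider_size n)"
  have N: "0 < N" using spider_size_ge[of n] by (simp add: N_def)
  have d: "0 < 1 - 2 * away n" using away_le[of n] by simp
  have t: "0 < (1 - eps) * E" using spider_hit_exp_tip_ge[of n] eps N by (simp add: E_def N_def)
  have "(1 - eps) * E \<le> (1 - eps) * (N / (1 - 2 * away n))"
    using spider_hit_exp_tip_le[of n] eps by (intro mult_left_mono) (auto simp: E_def N_def)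
  also have "\<dots> \<le> (1 - eps/2) * N"
  proof -
    have "0 \<le> eps * away n" using eps away_pos[of n] by simp
    hence "1 - eps \<le> (1 - eps/2) * (1 - 2 * away n)" using a by (simp add: algebra_simps)
    thus ?thesis using d N by (simp add: divide_simps mult_ac mult_right_mono)
  qed
  finally have "1 - ((1 - eps/2) * exp (1 - (1 - eps/2))) ^ (10 * spider_size n) \<le> spider_hit_gt n (tip n 0) ((1 - eps) * E)"
    using t eps unfolding N_def by (intro spider_hit_gt_tip0_ge) auto
  thus ?thesis using t by (simp add: hit_lt_def E_def)
qed

lemma spider_avoid_tip_le:
  assumes q: "q \<le> spider_size n" and a: "44 * real (spider_size n) * away n \<le> 1"
    and j: "10 * spider_size n + q \<le> j"
  shows "spider_avoid n j (tip n 0) \<le> 3 * (1/2) ^ q"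
proof -
  define k where "k = 10 * spider_size n + q"
  have "real q * away n \<le> real (spider_size n) * away n" using q away_pos[of n] by (intro mult_right_mono) auto
  hence "4 * away n * real k \<le> 1" using a by (simp add: k_def algebra_simps)
  hence e: "exp (4 * away n * real k) \<le> 3" by (rule exp_le_3)
  have "spider_avoid n j (tip n 0) \<le> geo_rate n ^ j * 2 ^ (10 * spider_size n)"
    using spider_avoid_le_geo[OF tip_in_spider_states[of 0 n], of j] depth_tip by (simp add: leg_len_def)
  also have "\<dots> \<le> geo_rate n ^ k * 2 ^ (10 * spider_size n)"
    using j geo_rate_bounds[of n] by (intro mult_right_mono power_decreasing) (auto simp: k_def)
  also have "\<dots> \<le> exp (4 * away n * real k) * (1/2) ^ (k - 10 * spider_size n)"
    by (rule geo_rate_pow_le) (simp add: k_def)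
  also have "\<dots> = exp (4 * away n * real k) * (1/2) ^ q" by (simp add: k_def)
  also have "\<dots> \<le> 3 * (1/2) ^ q" using e by (intro mult_right_mono) auto
  finally show ?thesis .
qed

text \<open>By time \<open>(1 + \<epsilon>) E\<close> the Poisson clock has made \<open>10N + q\<close> steps, \<open>q \<approx> \<epsilon>N/10\<close>, after which
  the walk from the tip of leg 0 has missed the root only with probability \<open>3 * 2 ^ -q\<close>.\<close>
lemma spider_hit_gt_tip_le:
  assumes eps: "0 < eps" and M: "10 / eps \<le> real M" and a: "44 * real (spider_size n) * away n \<le> 1"
  defines "u \<equiv> (1 + eps) / (1 + eps / 100)"
  shows "spider_hit_gt n (tip n 0) ((1 + eps) * spider_hit_exp n (tip n 0))
    \<le> 3 * (1/2) ^ (spider_size n div M) + (u * exp (1 - u)) ^ (10 * spider_size n)"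
proof -
  define N where "N = real (spider_size n)"
  define q where "q = spider_size n div M"
  define k where "k = 10 * spider_size n + q"
  have N: "16 \<le> N" using spider_size_ge[of n] by (simp add: N_def)
  have u: "1 < u" using eps by (simp add: u_def divide_simps)
  have qM: "real q * real M \<le> N" unfolding q_def N_def of_nat_mult[symmetric] of_nat_le_iff by simp
  have "real q * 10 \<le> real q * (eps * real M)" using M eps by (intro mult_left_mono) (auto simp: field_simps)
  also have "\<dots> \<le> eps * N" using mult_left_mono[OF qM, of eps] eps by (simp add: mult_ac)
  finally have "real q \<le> eps * N / 10" by simp
  hence "u * real k \<le> u * (10 * N * (1 + eps / 100))"
    using u by (intro mult_left_mono) (auto simp: k_def N_def algebra_simps)
  also have "\<dots> = (1 + eps) * (10 * N)" using eps by (simp add: u_def field_simps)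
  also have "\<dots> \<le> (1 + eps) * spider_hit_exp n (tip n 0)"
    using spider_hit_exp_tip_ge[of n] eps by (intro mult_left_mono) (auto simp: N_def)
  finally have t: "u * real k \<le> (1 + eps) * spider_hit_exp n (tip n 0)" .
  have "spider_hit_gt n (tip n 0) ((1 + eps) * spider_hit_exp n (tip n 0)) \<le> 3 * (1/2) ^ q + (u * exp (1 - u)) ^ k"
  proof (rule hit_gt_upper[OF stochastic_spider tip_in_spider_states[of 0 n] t less_imp_le[OF u]])
    fix j assume "k \<le> j"
    thus "spider_avoid n j (tip n 0) \<le> 3 * (1/2) ^ q"
      using a by (intro spider_avoid_tip_le) (auto simp: q_def k_def)
  qed simp_all
  moreover have "(u * exp (1 - u)) ^ k \<le> (u * exp (1 - u)) ^ (10 * spider_size n)"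
    using chernoff_base_bounds[of u] u by (intro power_decreasing) (auto simp: k_def)
  ultimately show ?thesis by (simp add: q_def)
qed

lemma spider_hit_gt_upper_tail:
  assumes eps: "0 < eps"
  shows "(\<lambda>n. spider_hit_gt n (tip n 0) ((1 + eps) * spider_hit_exp n (tip n 0))) \<longlonglongrightarrow> 0"
proof -
  define M where "M = nat \<lceil>10 / eps\<rceil> + 1"
  define u where "u = (1 + eps) / (1 + eps / 100)"
  have M: "0 < M" "10 / eps \<le> real M" by (auto simp: M_def) linarith
  have "1 < u" using eps by (simp add: u_def divide_simps)
  hence u: "0 \<le> u * exp (1 - u)" "u * exp (1 - u) < 1" using chernoff_base_bounds[of u] by auto
  have "filterlim (\<lambda>n. spider_size n div M) sequentially sequentially"
    unfolding filterlim_at_top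
  proof
    fix K show "eventually (\<lambda>n. K \<le> spider_size n div M) sequentially"
    proof (rule eventually_sequentiallyI)
      fix n assume "K * M \<le> n"
      hence "K * M div M \<le> spider_size n div M" by (intro div_le_mono) (simp add: spider_size_def)
      thus "K \<le> spider_size n div M" using M by simp
    qed
  qed
  hence lim: "(\<lambda>n. 3 * (1/2) ^ (spider_size n div M) + (u * exp (1 - u)) ^ (10 * spider_size n)) \<longlonglongrightarrow> 3 * 0 + 0"
    using u filterlim_mult_spider_size[of 10]
    by (intro tendsto_add tendsto_mult tendsto_const tendsto_power_filterlim) simp_all
  have ev: "eventually (\<lambda>n. spider_hit_gt n (tip n 0) ((1 + eps) * spider_hit_exp n (tip n 0))
      \<le> 3 * (1/2) ^ (spider_size n div M) + (u * exp (1 - u)) ^ (10 * spider_size n)) sequentially"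
    using eventually_spider_size_mult_away_le[of "1/44"]
  proof (rule eventually_mono)
    fix n assume "real (spider_size n) * away n \<le> 1/44"
    thus "spider_hit_gt n (tip n 0) ((1 + eps) * spider_hit_exp n (tip n 0))
      \<le> 3 * (1/2) ^ (spider_size n div M) + (u * exp (1 - u)) ^ (10 * spider_size n)"
      unfolding u_def by (intro spider_hit_gt_tip_le[OF eps M(2)]) simp
  qed simp
  have "0 \<le> spider_hit_gt n (tip n 0) t" for n t
    by (rule hit_gt_bounds(1)[OF stochastic_spider tip_in_spider_states]) simp
  thus ?thesis using tendsto_sandwich[OF always_eventually ev tendsto_const] lim by simp
qed

lemma spider_hit_lt_lower_tail:
  assumes eps: "0 < eps"
  shows "(\<lambda>n. spider_hit_lt n (tip n 0) ((1 - eps) * spider_hit_exp n (tip n 0))) \<longlonglongrightarrow> 0"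
proof (cases "eps < 1")
  case True
  define b where "b = (1 - eps/2) * exp (1 - (1 - eps/2))"
  have "0 < 1 - eps/2" "1 - eps/2 \<noteq> 1" using eps True by auto
  hence "0 \<le> b" "b < 1" using chernoff_base_bounds[of "1 - eps/2"] unfolding b_def by blast+
  hence lim: "(\<lambda>n. b ^ (10 * spider_size n)) \<longlonglongrightarrow> 0"
    using filterlim_mult_spider_size[of 10] by (intro tendsto_power_filterlim) simp_all
  have ev: "eventually (\<lambda>n. spider_hit_lt n (tip n 0) ((1 - eps) * spider_hit_exp n (tip n 0))
      \<le> b ^ (10 * spider_size n)) sequentially"
    using eventually_spider_size_mult_away_le[of "eps / 4"]
  proof (rule eventually_mono)
    fix n assume "real (spider_size n) * away n \<le> eps / 4"
    hence "away n \<le> eps / 4" using away_le_spider_size_mult_away[of n] by linarith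
    thus "spider_hit_lt n (tip n 0) ((1 - eps) * spider_hit_exp n (tip n 0)) \<le> b ^ (10 * spider_size n)"
      unfolding b_def by (rule spider_hit_lt_tip_le[OF eps True])
  qed (use eps in simp)
  have "0 \<le> spider_hit_lt n (tip n 0) t" for n t
    using hit_gt_bounds(2)[OF stochastic_spider tip_in_spider_states[of 0 n]] by (simp add: hit_lt_def)
  thus ?thesis using tendsto_sandwich[OF always_eventually ev tendsto_const lim] by simp
next
  case False
  hence "(1 - eps) * spider_hit_exp n (tip n 0) \<le> 0" for n
    using spider_hit_exp_tip_ge[of n] by (intro mult_nonpos_nonneg) auto
  thus ?thesis by (simp add: hit_lt_def)
qed

lemma spider_hit_concentration:
  "0 < eps \<Longrightarrow> (\<lambda>n. hit_dev_prob (spider_kernel n) (spider_states n) {0} (tip n 0) eps) \<longlonglongrightarrow> 0"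
  using tendsto_add[OF spider_hit_gt_upper_tail spider_hit_lt_lower_tail] by (simp add: hit_dev_prob_def)

theorem proposition1p4:
  shows "\<exists>(S :: nat \<Rightarrow> nat set) (P :: nat \<Rightarrow> nat \<Rightarrow> nat \<Rightarrow> real) (mu :: nat \<Rightarrow> nat \<Rightarrow> real)
            (A :: nat \<Rightarrow> nat set) (x :: nat \<Rightarrow> nat).
     (\<forall>n. fin_irr_rev_chain (S n) (P n) (mu n))
   \<and> (\<lambda>n. trel (S n) (P n)) \<in> o(\<lambda>n. tmix (S n) (P n) (mu n) (1/4))
   \<and> (\<forall>n. A n \<subseteq> S n \<and> x n \<in> S n)
   \<and> (\<forall>n. (\<Sum>y\<in>A n. mu n y) \<ge> 1/2
          \<and> hit_exp (P n) (S n) (A n) (x n) = tH (S n) (P n) (mu n) (1/2))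
   \<and> (\<forall>eps>0. (\<lambda>n. hit_dev_prob (P n) (S n) (A n) (x n) eps) \<longlonglongrightarrow> 0)
   \<and> \<not> has_cutoff S P mu"
proof (intro exI conjI allI impI)
  show "fin_irr_rev_chain (spider_states n) (spider_kernel n) (spider_stat n)" for n
    by (rule fin_irr_rev_spider)
  show "(\<lambda>n. trel (spider_states n) (spider_kernel n)) \<in> o(\<lambda>n. spider_tmix n (1/4))"
    by (rule trel_spider_small_tmix)
  show "{0} \<subseteq> spider_states n" "tip n 0 \<in> spider_states n" for n
    by (simp_all add: root_in_spider_states tip_in_spider_states)
  show "1/2 \<le> (\<Sum>y\<in>{0}. spider_stat n y)" for n
    using spider_stat_root_ge[of n] by simp
  show "spider_hit_exp n (tip n 0) = tH (spider_states n) (spider_kernel n) (spider_stat n) (1/2)" for n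
    by (rule tH_spider)
  show "(\<lambda>n. hit_dev_prob (spider_kernel n) (spider_states n) {0} (tip n 0) eps) \<longlonglongrightarrow> 0" if "0 < eps" for eps
    using spider_hit_concentration[OF that] .
  show "\<not> has_cutoff spider_states spider_kernel spider_stat"
    by (rule spider_no_cutoff)
qed

end
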